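(* Suppose $0<1/m\ll\delta\ll\nu\ll\epsilon,1/k,1/s,d_0\le1/2$, where $k\ge2$ and $s\ge1$ are integers. Suppose $d_1,\dots,d_s\ge d_0$ with $\sum_{i\in[s]}d_i=1$. Suppose that $H^{(k-1)}$ is an $(m,k,k-1)$-graph with $|\mathcal K_k(H^{(k-1)})|\ge\epsilon m^k$, that $H_1,\dots,H_s$ are $(m,k,k)$-graphs forming a partition of $\mathcal K_k(H^{(k-1)})$, and that $H_i$ is $(\epsilon+\delta,d_i)$-regular with respect to $H^{(k-1)}$ for each $i\in[s]$. Then there exist $(m,k,k)$-graphs $G_1,\dots,G_s$ such that (G1) $G_1,\dots,G_s$ form a partition of $\mathcal K_k(H^{(k-1)})$; (G2) $G_i$ is $(\epsilon,d_i)$-regular with respect to $H^{(k-1)}$ for each $i\in[s]$; and (G3) $|G_i\triangle H_i|\le\nu m^k$ for each $i\in[s]$.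
   Context: Hierarchy convention: a statement asserted for $0<a_1\ll a_2\ll\dots\ll a_r$ means there are non-decreasing functions such that it holds whenever each parameter is at most the corresponding function of the parameters to its right; integer parameters appear as reciprocals. $x=y\pm z$ means $|x-y|\le z$. Given disjoint sets $V_1,\dots,V_k$ each of size $m$ or $m+1$, a set is crossing if it meets each $V_i$ in at most one element. An $(m,k,j)$-graph on $\{V_1,\dots,V_k\}$ is a $j$-uniform hypergraph all of whose edges are crossing $j$-sets. For a $j$-graph $G$ ($j\ge2$), $\mathcal K_k(G)$ is the set of $k$-sets all of whose $j$-subsets are edges of $G$; if $j=1$, $\mathcal K_k(H^{(1)})$ denotes the crossing $k$-subsets of the vertex set $H^{(1)}$. $H^{(k)}$ is $(\epsilon,d)$-regular w.r.t. $H^{(k-1)}$ if every $Q\subseteq H^{(k-1)}$ with $|\mathcal K_k(Q)|\ge\epsilon|\mathcal K_k(H^{(k-1)})|$ satisfies $|H^{(k)}\cap\mathcal K_k(Q)|=(d\pm\epsilon)|\mathcal K_k(Q)|$. *)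

theory Defs
  imports Complex_Main "HOL-Library.Disjoint_Sets"
begin

definition vertex_classes :: "nat \<Rightarrow> nat \<Rightarrow> (nat \<Rightarrow> 'a set) \<Rightarrow> bool" where
  "vertex_classes m k V \<longleftrightarrow>
     disjoint_family_on V {1..k} \<and> (\<forall>i\<in>{1..k}. card (V i) = m \<or> card (V i) = Suc m)"

definition crossing :: "nat \<Rightarrow> (nat \<Rightarrow> 'a set) \<Rightarrow> 'a set \<Rightarrow> bool" where
  "crossing k V A \<longleftrightarrow> A \<subseteq> (\<Union>i\<in>{1..k}. V i) \<and> (\<forall>i\<in>{1..k}. card (A \<inter> V i) \<le> 1)"

text \<open>A j-graph on the classes (an (m,k,j)-graph once vertex_classes m k V holds): all edges are crossing j-sets.\<close>
definition kj_graph :: "nat \<Rightarrow> (nat \<Rightarrow> 'a set) \<Rightarrow> nat \<Rightarrow> 'a set set \<Rightarrow> bool" where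
  "kj_graph k V j G \<longleftrightarrow> (\<forall>A\<in>G. crossing k V A \<and> card A = j)"

text \<open>K_k(G) for a j-graph G: crossing k-sets all of whose j-subsets are edges of G.
  (For j \<ge> 2 the crossing condition is automatic; for j = 1 this is the set of crossing
  k-subsets of the vertex set of G.)\<close>
definition cliques :: "nat \<Rightarrow> (nat \<Rightarrow> 'a set) \<Rightarrow> nat \<Rightarrow> 'a set set \<Rightarrow> 'a set set" where
  "cliques k V j G = {A. crossing k V A \<and> card A = k \<and> (\<forall>B. B \<subseteq> A \<and> card B = j \<longrightarrow> B \<in> G)}"

definition regular_wrt :: "nat \<Rightarrow> (nat \<Rightarrow> 'a set) \<Rightarrow> real \<Rightarrow> real \<Rightarrow> 'a set set \<Rightarrow> 'a set set \<Rightarrow> bool" where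
  "regular_wrt k V eps d Hk Hk1 \<longleftrightarrow>
     (\<forall>Q. Q \<subseteq> Hk1 \<and> real (card (cliques k V (k-1) Q)) \<ge> eps * real (card (cliques k V (k-1) Hk1))
        \<longrightarrow> \<bar>real (card (Hk \<inter> cliques k V (k-1) Q)) - d * real (card (cliques k V (k-1) Q))\<bar>
              \<le> eps * real (card (cliques k V (k-1) Q)))"

definition partitions :: "nat \<Rightarrow> (nat \<Rightarrow> 'b set) \<Rightarrow> 'b set \<Rightarrow> bool" where
  "partitions s H X \<longleftrightarrow> disjoint_family_on H {1..s} \<and> (\<Union>i\<in>{1..s}. H i) = X"

definition hier_fun :: "nat \<Rightarrow> (real list \<Rightarrow> real) \<Rightarrow> bool" where
  "hier_fun n f \<longleftrightarrow>
     (\<forall>xs. length xs = n \<and> (\<forall>x\<in>set xs. 0 < x) \<longrightarrow> 0 < f xs) \<and>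
     (\<forall>xs ys. length xs = n \<and> (\<forall>x\<in>set xs. 0 < x) \<and> list_all2 (\<le>) xs ys \<longrightarrow> f xs \<le> f ys)"

end

theory Submission
  imports Defs "HOL-Probability.Hoeffding"
begin

text \<open>Keep the label that the partition \<open>H\<^sub>1, ..., H\<^sub>s\<close> gives to each clique of
  \<open>K\<^sub>k(H\<^sup>(\<^sup>k\<^sup>-\<^sup>1\<^sup>))\<close>, except that independently with a small probability \<open>\<gamma>\<close> (of order \<open>\<nu>\<close>)
  a clique is relabelled, receiving label \<open>i\<close> with probability \<open>d\<^sub>i\<close>. For every \<open>Q\<close> with
  \<open>|K\<^sub>k(Q)| \<ge> \<epsilon> |K\<^sub>k(H\<^sup>(\<^sup>k\<^sup>-\<^sup>1\<^sup>))|\<close> the expected number of cliques of \<open>K\<^sub>k(Q)\<close> labelled \<open>i\<close> is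
  \<open>(1 - \<gamma>) |H\<^sub>i \<inter> K\<^sub>k(Q)| + \<gamma> d\<^sub>i |K\<^sub>k(Q)|\<close>, so the deviation of \<open>H\<^sub>i\<close> from density \<open>d\<^sub>i\<close>
  shrinks by the factor \<open>1 - \<gamma>\<close>. The gain of about \<open>\<gamma> \<epsilon> |K\<^sub>k(Q)|\<close> pays both for the random
  fluctuations and for passing from the threshold \<open>\<epsilon> + \<delta>\<close> to \<open>\<epsilon>\<close>. The latter costs
  \<open>O(\<delta>/\<epsilon>) |K\<^sub>k(Q)|\<close>: a set \<open>Q\<close> below the threshold \<open>\<epsilon> + \<delta>\<close> is enlarged edge by edge until
  it passes it, and each edge creates at most \<open>|V\<^sub>1 \<union> ... \<union> V\<^sub>k|\<close> new cliques. Hoeffding's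
  inequality gives tails \<open>exp(-\<Omega>(m\<^sup>k))\<close>, which beat a union bound over the \<open>2\<^sup>O\<^sup>(\<^sup>m\<^sup>k\<^sup>-\<^sup>1\<^sup>)\<close>
  subsets \<open>Q\<close> of \<open>H\<^sup>(\<^sup>k\<^sup>-\<^sup>1\<^sup>)\<close>, and also keep the number of relabelled cliques below \<open>\<nu> m\<^sup>k\<close>.\<close>

section \<open>Random relabelling\<close>

lemma Hoeffding_Pi_pmf:
  fixes Y :: "'a \<Rightarrow> 'b \<Rightarrow> real"
  assumes "finite C" and "S \<subseteq> C" and "S \<noteq> {}"
    and bounded: "\<And>K y. K \<in> S \<Longrightarrow> Y K y \<in> {0..1}" and "e \<ge> 0"
  shows "measure_pmf.prob (Pi_pmf C dflt (\<lambda>_. q))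
           {\<omega>. e \<le> \<bar>(\<Sum>K\<in>S. Y K (\<omega> K)) - (\<Sum>K\<in>S. measure_pmf.expectation q (Y K))\<bar>}
         \<le> 2 * exp (-2 * e\<^sup>2 / real (card S))"
proof -
  let ?p = "Pi_pmf C dflt (\<lambda>_. q)"
  have "finite S"
    using assms(1,2) finite_subset by blast
  have marginal: "measure_pmf.expectation ?p (\<lambda>\<omega>. Y K (\<omega> K)) = measure_pmf.expectation q (Y K)"
    if "K \<in> S" for K
  proof -
    have "map_pmf (\<lambda>\<omega>. \<omega> K) ?p = q"
      using that assms(1,2) by (subst Pi_pmf_component) auto
    then show ?thesis
      by (metis integral_map_pmf)
  qed
  interpret Hoeffding_ineq ?p S "\<lambda>K \<omega>. Y K (\<omega> K)" "\<lambda>_. 0" "\<lambda>_. 1"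
     "\<Sum>K\<in>S. measure_pmf.expectation ?p (\<lambda>\<omega>. Y K (\<omega> K))"
  proof unfold_locales
    show "prob_space.indep_vars ?p (\<lambda>_. borel) (\<lambda>K \<omega>. Y K (\<omega> K)) S"
      by (intro prob_space.indep_vars_compose2[OF _ prob_space.indep_vars_subset[OF _ indep_vars_Pi_pmf]])
         (use assms in \<open>auto simp: measure_pmf.prob_space_axioms\<close>)
  qed (use \<open>finite S\<close> bounded in auto)
  have "0 < real (card S)"
    using \<open>finite S\<close> \<open>S \<noteq> {}\<close> by (simp add: card_gt_0_iff)
  then show ?thesis
    using Hoeffding_ineq_abs_ge[OF \<open>e \<ge> 0\<close>] marginal by simp
qed

lemma Pi_pmf_exists_concentrated:
  fixes Y :: "'i \<Rightarrow> 'a \<Rightarrow> 'b \<Rightarrow> real"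
  assumes "finite C" and "finite I"
    and S: "\<And>x. x \<in> I \<Longrightarrow> S x \<subseteq> C \<and> S x \<noteq> {}"
    and bounded: "\<And>x K y. x \<in> I \<Longrightarrow> K \<in> S x \<Longrightarrow> Y x K y \<in> {0..1}"
    and t: "\<And>x. x \<in> I \<Longrightarrow> 0 \<le> t x"
    and small: "(\<Sum>x\<in>I. 2 * exp (-2 * (t x)\<^sup>2 / real (card (S x)))) < 1"
  shows "\<exists>\<omega>\<in>set_pmf (Pi_pmf C dflt (\<lambda>_. q)). \<forall>x\<in>I.
           \<bar>(\<Sum>K\<in>S x. Y x K (\<omega> K)) - (\<Sum>K\<in>S x. measure_pmf.expectation q (Y x K))\<bar> < t x"
proof -
  let ?p = "Pi_pmf C dflt (\<lambda>_. q)"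
  define Bad where "Bad x = {\<omega>. t x \<le> \<bar>(\<Sum>K\<in>S x. Y x K (\<omega> K))
                                  - (\<Sum>K\<in>S x. measure_pmf.expectation q (Y x K))\<bar>}" for x
  have "measure_pmf.prob ?p (\<Union>x\<in>I. Bad x) \<le> (\<Sum>x\<in>I. measure_pmf.prob ?p (Bad x))"
    by (rule measure_pmf.finite_measure_subadditive_finite) (use \<open>finite I\<close> in auto)
  also have "\<dots> \<le> (\<Sum>x\<in>I. 2 * exp (-2 * (t x)\<^sup>2 / real (card (S x))))"
    unfolding Bad_def using S bounded t by (intro sum_mono Hoeffding_Pi_pmf[OF \<open>finite C\<close>]) auto
  finally have "measure_pmf.prob ?p (\<Union>x\<in>I. Bad x) \<noteq> 1"
    using small by linarith
  then have "measure_pmf.prob ?p (- (\<Union>x\<in>I. Bad x)) \<noteq> 0"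
    using measure_pmf.prob_compl[of "\<Union>x\<in>I. Bad x" ?p] by (simp add: Compl_eq_Diff_UNIV)
  then have "set_pmf ?p \<inter> - (\<Union>x\<in>I. Bad x) \<noteq> {}"
    by (simp add: measure_pmf_zero_iff)
  then obtain \<omega> where "\<omega> \<in> set_pmf ?p" and "\<forall>x\<in>I. \<omega> \<notin> Bad x"
    by blast
  then show ?thesis
    unfolding Bad_def by (auto simp: not_le)
qed

lemma union_bound_below_one:
  fixes \<beta> :: real
  assumes "1 \<le> s" and "2 + real s + real n < \<beta>"
  shows "2 * (real s * 2 ^ n + 1) * exp (- \<beta>) < 1"
proof -
  have pow2: "(2::real) ^ j \<le> exp (real j)" for j
  proof -
    have "(2::real) ^ j \<le> exp 1 ^ j"
      using exp_ge_add_one_self[of 1] by (intro power_mono) auto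
    then show ?thesis
      by (simp add: exp_of_nat_mult[symmetric])
  qed
  have "1 * 1 \<le> real s * 2 ^ n"
    using assms(1) by (intro mult_mono) auto
  then have "2 * (real s * 2 ^ n + 1) \<le> 2 ^ 2 * real s * 2 ^ n"
    by simp
  also have "\<dots> \<le> exp (real 2) * exp (real s) * exp (real n)"
  proof -
    have "real s \<le> exp (real s)"
      using exp_ge_add_one_self[of "real s"] by linarith
    then show ?thesis
      using pow2[of 2] pow2[of n] by (intro mult_mono) auto
  qed
  also have "\<dots> = exp (2 + real s + real n)"
    by (simp add: exp_add)
  finally have "2 * (real s * 2 ^ n + 1) * exp (- \<beta>) \<le> exp (2 + real s + real n) * exp (- \<beta>)"
    by (intro mult_right_mono) auto
  also have "\<dots> < 1"
    using assms(2) by (simp add: exp_add[symmetric])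
  finally show ?thesis .
qed

lemma exists_pmf_with_weights:
  fixes w :: "'a \<Rightarrow> real"
  assumes "finite A" and "\<And>x. x \<in> A \<Longrightarrow> 0 \<le> w x" and "(\<Sum>x\<in>A. w x) = 1"
  shows "\<exists>q. (\<forall>x\<in>A. pmf q x = w x) \<and> set_pmf q \<subseteq> A"
proof -
  define f where "f x = (if x \<in> A then w x else 0)" for x
  have nonneg: "0 \<le> f x" for x
    using assms(2) by (simp add: f_def)
  have "(\<integral>\<^sup>+x. ennreal (f x) \<partial>count_space UNIV) = (\<Sum>x\<in>A. ennreal (f x))"
    by (rule nn_integral_count_space') (use \<open>finite A\<close> in \<open>auto simp: f_def\<close>)
  also have "\<dots> = 1"
    using assms by (simp add: f_def)
  finally have pmf_f: "pmf (embed_pmf f) x = f x" for x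
    by (rule pmf_embed_pmf[OF nonneg])
  have "set_pmf (embed_pmf f) \<subseteq> A"
    by (auto simp: set_pmf_eq pmf_f f_def)
  then show ?thesis
    by (intro exI[of _ "embed_pmf f"]) (simp add: pmf_f f_def)
qed

lemma exists_relabelling_pmf:
  fixes d :: "nat \<Rightarrow> real"
  assumes "0 \<le> \<gamma>" and "\<gamma> \<le> 1" and d: "\<And>i. i \<in> {1..s} \<Longrightarrow> 0 \<le> d i" "(\<Sum>i=1..s. d i) = 1"
  obtains q :: "nat pmf" where "pmf q 0 = 1 - \<gamma>" and "\<And>i. i \<in> {1..s} \<Longrightarrow> pmf q i = \<gamma> * d i"
    and "set_pmf q \<subseteq> {0..s}"
proof -
  define w where "w x = (if x = 0 then 1 - \<gamma> else \<gamma> * d x)" for x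
  have "(\<Sum>x=0..s. w x) = 1 - \<gamma> + (\<Sum>x=1..s. \<gamma> * d x)"
    by (simp add: w_def sum.atLeast_Suc_atMost)
  also have "\<dots> = 1"
    using d(2) by (simp add: sum_distrib_left[symmetric])
  finally have "(\<Sum>x=0..s. w x) = 1" .
  moreover have "0 \<le> w x" if "x \<in> {0..s}" for x
    using that assms(1,2) d(1) by (auto simp: w_def)
  ultimately obtain q :: "nat pmf" where qw: "\<forall>x\<in>{0..s}. pmf q x = w x" and "set_pmf q \<subseteq> {0..s}"
    using exists_pmf_with_weights[OF finite_atLeastAtMost] by blast
  moreover have "pmf q 0 = 1 - \<gamma>"
    using qw by (simp add: w_def)
  moreover have "pmf q i = \<gamma> * d i" if "i \<in> {1..s}" for i
    using qw that by (auto simp: w_def)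
  ultimately show ?thesis
    using that by blast
qed

definition relabel :: "nat \<Rightarrow> nat \<Rightarrow> nat" where
  "relabel a y = (if y = 0 then a else y)"

lemma expectation_of_bool_relabel:
  fixes q :: "nat pmf"
  assumes "pmf q 0 = 1 - \<gamma>" and "pmf q i = \<gamma> * di" and "i \<noteq> 0" and "a \<noteq> 0"
  shows "measure_pmf.expectation q (\<lambda>y. of_bool (relabel a y = i))
           = (1 - \<gamma>) * of_bool (a = i) + \<gamma> * di"
proof -
  have "(\<lambda>y. of_bool (relabel a y = i) :: real) = indicator (if a = i then {0, i} else {i})"
    using assms(3,4) by (auto simp: relabel_def indicator_def fun_eq_iff)
  then show ?thesis
    using assms by (simp add: measure_measure_pmf_finite)
qed

lemma expectation_of_bool_nonzero:
  fixes q :: "nat pmf"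
  assumes "pmf q 0 = 1 - \<gamma>"
  shows "measure_pmf.expectation q (\<lambda>y. of_bool (y \<noteq> 0)) = \<gamma>"
proof -
  have nonzero: "(\<lambda>y. of_bool (y \<noteq> 0) :: real) = indicator (- {0})"
    by (auto simp: indicator_def)
  have "measure_pmf.expectation q (\<lambda>y. of_bool (y \<noteq> 0)) = measure_pmf.prob q (- {0})"
    unfolding nonzero by simp
  also have "\<dots> = 1 - pmf q 0"
    using measure_pmf.prob_compl[of "{0}" q] by (simp add: Compl_eq_Diff_UNIV measure_pmf_single)
  finally show ?thesis
    using assms by simp
qed

lemma random_relabelling_exists:
  fixes C :: "'a set" and SS :: "'a set set" and h :: "'a \<Rightarrow> nat" and d :: "nat \<Rightarrow> real"
  assumes "finite C" and "C \<noteq> {}" and h: "\<And>K. K \<in> C \<Longrightarrow> h K \<in> {1..s}"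
    and "finite SS" and SS: "\<And>S. S \<in> SS \<Longrightarrow> S \<subseteq> C \<and> \<sigma> \<le> real (card S)" and "0 < \<sigma>"
    and "0 \<le> \<gamma>" "\<gamma> \<le> 1" and d: "\<And>i. i \<in> {1..s} \<Longrightarrow> 0 \<le> d i" "(\<Sum>i=1..s. d i) = 1"
    and "0 \<le> t" "0 \<le> \<tau>" and \<beta>: "\<beta> \<le> 2 * t\<^sup>2 * \<sigma>" "\<beta> * real (card C) \<le> 2 * \<tau>\<^sup>2"
    and small: "2 * (real s * real (card SS) + 1) * exp (- \<beta>) < 1"
  shows "\<exists>\<omega>. (\<forall>K\<in>C. \<omega> K \<in> {0..s}) \<and>
    real (card {K\<in>C. \<omega> K \<noteq> 0}) < \<gamma> * real (card C) + \<tau> \<and>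
    (\<forall>i\<in>{1..s}. \<forall>S\<in>SS. \<bar>real (card {K\<in>S. relabel (h K) (\<omega> K) = i})
       - ((1 - \<gamma>) * real (card {K\<in>S. h K = i}) + \<gamma> * d i * real (card S))\<bar> < t * real (card S))"
proof -
  obtain q :: "nat pmf" where q0: "pmf q 0 = 1 - \<gamma>"
    and qi: "\<And>i. i \<in> {1..s} \<Longrightarrow> pmf q i = \<gamma> * d i" and set_q: "set_pmf q \<subseteq> {0..s}"
    using exists_relabelling_pmf[OF \<open>0 \<le> \<gamma>\<close> \<open>\<gamma> \<le> 1\<close> d] by blast
  \<comment> \<open>\<open>None\<close> indexes the number of relabelled cliques, \<open>Some (i, S)\<close> the number of cliques of
    \<open>S\<close> that end up with label \<open>i\<close>.\<close>
  define I where "I = insert None (Some ` ({1..s} \<times> SS))"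
  define T :: "(nat \<times> 'a set) option \<Rightarrow> 'a set"
    where "T x = (case x of None \<Rightarrow> C | Some (i, S) \<Rightarrow> S)" for x
  define Y :: "(nat \<times> 'a set) option \<Rightarrow> 'a \<Rightarrow> nat \<Rightarrow> real"
    where "Y x K y = (case x of None \<Rightarrow> of_bool (y \<noteq> 0) | Some (i, S) \<Rightarrow> of_bool (relabel (h K) y = i))"
    for x K y
  define dev :: "(nat \<times> 'a set) option \<Rightarrow> real"
    where "dev x = (case x of None \<Rightarrow> \<tau> | Some (i, S) \<Rightarrow> t * real (card S))" for x
  have tail_le: "2 * exp (-2 * (dev x)\<^sup>2 / real (card (T x))) \<le> 2 * exp (- \<beta>)" if xI: "x \<in> I" for x
  proof (cases x)
    case None
    have "\<beta> \<le> 2 * \<tau>\<^sup>2 / real (card C)"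
      using \<beta>(2) \<open>finite C\<close> \<open>C \<noteq> {}\<close> by (simp add: card_gt_0_iff pos_le_divide_eq)
    then show ?thesis
      using None by (simp add: T_def dev_def)
  next
    case (Some p)
    then obtain i S where x: "x = Some (i, S)" and "S \<in> SS"
      using xI by (auto simp: I_def)
    then have "0 < real (card S)"
      using SS \<open>0 < \<sigma>\<close> by fastforce
    then have "2 * (t * real (card S))\<^sup>2 / real (card S) = 2 * t\<^sup>2 * real (card S)"
      by (simp add: power2_eq_square)
    also have "\<dots> \<ge> 2 * t\<^sup>2 * \<sigma>"
      using SS[OF \<open>S \<in> SS\<close>] by (intro mult_left_mono) auto
    also note \<beta>(1)
    finally show ?thesis
      by (simp add: x T_def dev_def)
  qed
  have "(\<Sum>x\<in>I. 2 * exp (-2 * (dev x)\<^sup>2 / real (card (T x)))) \<le> real (card I) * (2 * exp (- \<beta>))"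
    using tail_le by (intro sum_bounded_above) auto
  also have "real (card I) = real s * real (card SS) + 1"
    using \<open>finite SS\<close> by (simp add: I_def card_image card_cartesian_product image_iff)
  also have "(real s * real (card SS) + 1) * (2 * exp (- \<beta>)) < 1"
    using small by (simp only: ac_simps)
  finally have "(\<Sum>x\<in>I. 2 * exp (-2 * (dev x)\<^sup>2 / real (card (T x)))) < 1" .
  moreover have "finite I"
    using \<open>finite SS\<close> by (simp add: I_def)
  moreover have "T x \<subseteq> C \<and> T x \<noteq> {}" if "x \<in> I" for x
    using that SS \<open>0 < \<sigma>\<close> \<open>C \<noteq> {}\<close> by (fastforce simp: I_def T_def)
  moreover have "0 \<le> dev x" for x
    using \<open>0 \<le> t\<close> \<open>0 \<le> \<tau>\<close> by (simp add: dev_def split: option.split)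
  ultimately obtain \<omega> where \<omega>: "\<omega> \<in> set_pmf (Pi_pmf C 0 (\<lambda>_. q))"
    and conc: "\<And>x. x \<in> I \<Longrightarrow> \<bar>(\<Sum>K\<in>T x. Y x K (\<omega> K))
                   - (\<Sum>K\<in>T x. measure_pmf.expectation q (Y x K))\<bar> < dev x"
    using Pi_pmf_exists_concentrated[OF \<open>finite C\<close>, of I T Y dev 0 q]
    by (fastforce simp: Y_def split: option.split)
  have Y_None: "Y None K = (\<lambda>y. of_bool (y \<noteq> 0))" for K
    by (simp add: Y_def fun_eq_iff)
  have Y_Some: "Y (Some (i, S)) K = (\<lambda>y. of_bool (relabel (h K) y = i))" for i S K
    by (simp add: Y_def fun_eq_iff)
  have "\<omega> K \<in> {0..s}" if "K \<in> C" for K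
    using \<omega> that set_q by (auto simp: set_Pi_pmf[OF \<open>finite C\<close>] PiE_dflt_def)
  moreover have "real (card {K\<in>C. \<omega> K \<noteq> 0}) < \<gamma> * real (card C) + \<tau>"
  proof -
    have "(\<Sum>K\<in>C. Y None K (\<omega> K)) = real (card {K\<in>C. \<omega> K \<noteq> 0})"
      using \<open>finite C\<close> by (simp add: Y_None sum_of_bool_eq Int_def)
    moreover have "(\<Sum>K\<in>C. measure_pmf.expectation q (Y None K)) = \<gamma> * real (card C)"
      unfolding Y_None expectation_of_bool_nonzero[OF q0] by simp
    moreover have "\<bar>(\<Sum>K\<in>C. Y None K (\<omega> K)) - (\<Sum>K\<in>C. measure_pmf.expectation q (Y None K))\<bar> < \<tau>"
      using conc[of None] by (simp add: I_def T_def dev_def)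
    ultimately show ?thesis
      by (simp add: abs_less_iff)
  qed
  moreover have "\<bar>real (card {K\<in>S. relabel (h K) (\<omega> K) = i})
       - ((1 - \<gamma>) * real (card {K\<in>S. h K = i}) + \<gamma> * d i * real (card S))\<bar> < t * real (card S)"
    if i: "i \<in> {1..s}" and "S \<in> SS" for i S
  proof -
    have "finite S"
      using SS[OF \<open>S \<in> SS\<close>] \<open>finite C\<close> finite_subset by blast
    have "measure_pmf.expectation q (Y (Some (i, S)) K) = (1 - \<gamma>) * of_bool (h K = i) + \<gamma> * d i"
      if "K \<in> S" for K
    proof -
      have "h K \<in> {1..s}"
        using h SS[OF \<open>S \<in> SS\<close>] \<open>K \<in> S\<close> by blast
      then show ?thesis
        using expectation_of_bool_relabel[OF q0 qi[OF i]] i by (simp add: Y_Some)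
    qed
    then have "(\<Sum>K\<in>S. measure_pmf.expectation q (Y (Some (i, S)) K))
               = (1 - \<gamma>) * real (card {K\<in>S. h K = i}) + \<gamma> * d i * real (card S)"
      using \<open>finite S\<close> by (simp add: sum.distrib sum_distrib_left[symmetric] sum_of_bool_eq Int_def)
    then show ?thesis
      using conc[of "Some (i, S)"] that \<open>finite S\<close>
      by (simp add: I_def T_def Y_Some dev_def sum_of_bool_eq Int_def)
  qed
  ultimately show ?thesis
    by blast
qed

section \<open>Counting cliques\<close>

lemma finite_vertices:
  assumes "vertex_classes m k V" and "0 < m"
  shows "finite (\<Union>i\<in>{1..k}. V i)"
proof -
  have "card (V i) > 0" if "i \<in> {1..k}" for i
    using assms that by (auto simp: vertex_classes_def)
  then show ?thesis
    using card_ge_0_finite by blast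
qed

lemma card_vertices_le:
  assumes "vertex_classes m k V" and "0 < m"
  shows "card (\<Union>i\<in>{1..k}. V i) \<le> 2 * k * m"
proof -
  have "card (\<Union>i\<in>{1..k}. V i) \<le> (\<Sum>i\<in>{1..k}. card (V i))"
    by (rule card_UN_le) simp
  also have "\<dots> \<le> (\<Sum>i\<in>{1..k}. 2 * m)"
  proof (intro sum_mono)
    fix i assume "i \<in> {1..k}"
    then have "card (V i) = m \<or> card (V i) = Suc m"
      using assms(1) by (simp add: vertex_classes_def)
    then show "card (V i) \<le> 2 * m"
      using assms(2) by auto
  qed
  finally show ?thesis
    by simp
qed

lemma card_le_power_if_subsets_of_card:
  assumes "finite U" and "F \<subseteq> {A. A \<subseteq> U \<and> card A = j}"
  shows "card F \<le> card U ^ j"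
proof -
  have "card F \<le> card {A. A \<subseteq> U \<and> card A = j}"
    using assms by (intro card_mono) auto
  also have "\<dots> = card U choose j"
    using n_subsets[OF \<open>finite U\<close>] by simp
  also have "\<dots> \<le> card U ^ j"
    by (cases "j \<le> card U") (simp_all add: binomial_le_pow binomial_eq_0)
  finally show ?thesis .
qed

lemma cliques_subset: "cliques k V j Q \<subseteq> {A. A \<subseteq> (\<Union>i\<in>{1..k}. V i) \<and> card A = k}"
  unfolding cliques_def crossing_def by blast

lemma kj_graph_subset: "kj_graph k V j G \<Longrightarrow> G \<subseteq> {A. A \<subseteq> (\<Union>i\<in>{1..k}. V i) \<and> card A = j}"
  unfolding kj_graph_def crossing_def by blast

lemma cliques_mono: "Q \<subseteq> Q' \<Longrightarrow> cliques k V j Q \<subseteq> cliques k V j Q'"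
  unfolding cliques_def by blast

lemma finite_cliques: "finite (\<Union>i\<in>{1..k}. V i) \<Longrightarrow> finite (cliques k V j Q)"
  by (rule finite_subset[OF cliques_subset]) simp

lemma finite_kj_graph:
  assumes "finite (\<Union>i\<in>{1..k}. V i)" and "kj_graph k V j G"
  shows "finite G"
  by (rule finite_subset[OF _ finite_Collect_subsets[OF assms(1)]])
    (use kj_graph_subset[OF assms(2)] in blast)

lemma kj_graph_if_subset_cliques: "G \<subseteq> cliques k V j H \<Longrightarrow> kj_graph k V k G"
  unfolding kj_graph_def cliques_def by auto

lemma card_cliques_le:
  assumes "vertex_classes m k V" and "0 < m"
  shows "card (cliques k V j Q) \<le> (2 * k) ^ k * m ^ k"
proof -
  have "card (cliques k V j Q) \<le> card (\<Union>i\<in>{1..k}. V i) ^ k"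
    by (rule card_le_power_if_subsets_of_card[OF finite_vertices[OF assms] cliques_subset])
  also have "\<dots> \<le> (2 * k * m) ^ k"
    using card_vertices_le[OF assms] by (rule power_mono) simp
  finally show ?thesis
    by (simp add: power_mult_distrib)
qed

lemma card_kj_graph_le:
  assumes "vertex_classes m k V" and "0 < m" and "kj_graph k V j G"
  shows "card G \<le> (2 * k) ^ j * m ^ j"
proof -
  have "card G \<le> card (\<Union>i\<in>{1..k}. V i) ^ j"
    by (rule card_le_power_if_subsets_of_card[OF finite_vertices[OF assms(1,2)] kj_graph_subset[OF assms(3)]])
  also have "\<dots> \<le> (2 * k * m) ^ j"
    using card_vertices_le[OF assms(1,2)] by (rule power_mono) simp
  finally show ?thesis
    by (simp add: power_mult_distrib)
qed

lemma one_le_double_power: "1 \<le> real ((2 * k) ^ k)"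
proof -
  have "0 < (2 * k) ^ k"
    by (cases k) simp_all
  then have "1 \<le> (2 * k) ^ k"
    by linarith
  then show ?thesis
    by (metis of_nat_1 of_nat_le_iff)
qed

lemma card_vertices_le_fraction:
  fixes \<delta> \<epsilon> :: real
  assumes vc: "vertex_classes m k V" and "2 \<le> k" and "0 < m" and "0 \<le> \<delta>" and "0 < \<epsilon>"
    and m_large: "2 * real k \<le> \<delta> * \<epsilon> * real m"
    and many: "\<epsilon> * real m ^ k \<le> real (card (cliques k V (k-1) H))"
  shows "real (card (\<Union>i\<in>{1..k}. V i)) \<le> \<delta> * real (card (cliques k V (k-1) H))"
proof -
  have "real (card (\<Union>i\<in>{1..k}. V i)) \<le> 2 * real k * real m"
    using card_vertices_le[OF vc \<open>0 < m\<close>] by (metis of_nat_le_iff of_nat_mult of_nat_numeral)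
  also have "\<dots> \<le> \<delta> * \<epsilon> * real m * real m"
    using m_large by (intro mult_right_mono) auto
  also have "\<dots> \<le> \<delta> * (\<epsilon> * real m ^ k)"
  proof -
    have "real m ^ 2 \<le> real m ^ k"
      using \<open>2 \<le> k\<close> \<open>0 < m\<close> by (intro power_increasing) auto
    then show ?thesis
      using \<open>0 \<le> \<delta>\<close> \<open>0 < \<epsilon>\<close> by (simp add: power2_eq_square mult.assoc mult_left_mono)
  qed
  also have "\<dots> \<le> \<delta> * real (card (cliques k V (k-1) H))"
    using many \<open>0 \<le> \<delta>\<close> by (intro mult_left_mono) auto
  finally show ?thesis .
qed

lemma card_image_subsets_le: "finite H \<Longrightarrow> card (f ` {Q. Q \<subseteq> H \<and> P Q}) \<le> 2 ^ card H"
proof -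
  assume "finite H"
  have sub: "{Q. Q \<subseteq> H \<and> P Q} \<subseteq> Pow H"
    by auto
  have "card (f ` {Q. Q \<subseteq> H \<and> P Q}) \<le> card {Q. Q \<subseteq> H \<and> P Q}"
    by (rule card_image_le) (use finite_subset[OF sub] \<open>finite H\<close> in simp)
  also have "\<dots> \<le> card (Pow H)"
    using sub \<open>finite H\<close> by (intro card_mono) auto
  finally show ?thesis
    using \<open>finite H\<close> by (simp add: card_Pow)
qed

text \<open>A new clique of \<open>insert e X\<close> contains the \<open>(k-1)\<close>-set \<open>e\<close>, so it is \<open>e\<close> plus one vertex.\<close>
lemma card_cliques_insert_le:
  assumes "finite (\<Union>i\<in>{1..k}. V i)" and "card e = k - 1" and "1 \<le> k"
  shows "card (cliques k V (k-1) (insert e X))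
           \<le> card (cliques k V (k-1) X) + card (\<Union>i\<in>{1..k}. V i)"
proof -
  let ?U = "\<Union>i\<in>{1..k}. V i"
  have new: "cliques k V (k-1) (insert e X) - cliques k V (k-1) X \<subseteq> (\<lambda>v. insert v e) ` ?U"
  proof
    fix A assume "A \<in> cliques k V (k-1) (insert e X) - cliques k V (k-1) X"
    then have "A \<in> cliques k V (k-1) (insert e X)" and "A \<notin> cliques k V (k-1) X"
      by simp_all
    then have "crossing k V A" and "card A = k"
      and all: "\<And>B. B \<subseteq> A \<Longrightarrow> card B = k - 1 \<Longrightarrow> B \<in> insert e X"
      by (simp_all add: cliques_def)
    then have "A \<subseteq> ?U"
      by (simp add: crossing_def)
    obtain B where "B \<subseteq> A" and "card B = k - 1" and "B \<notin> X"
      using \<open>A \<notin> cliques k V (k-1) X\<close> \<open>crossing k V A\<close> \<open>card A = k\<close>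
      by (auto simp: cliques_def)
    then have "e \<subseteq> A"
      using all by blast
    have "finite A"
      by (rule card_ge_0_finite) (use \<open>card A = k\<close> \<open>1 \<le> k\<close> in simp)
    then have "card (A - e) = card A - card e"
      using \<open>e \<subseteq> A\<close> by (simp add: card_Diff_subset finite_subset)
    then have "card (A - e) = 1"
      using \<open>card A = k\<close> assms(2,3) by simp
    then obtain v where "A - e = {v}"
      by (rule card_1_singletonE)
    then have "A = insert v e" and "v \<in> ?U"
      using \<open>e \<subseteq> A\<close> \<open>A \<subseteq> ?U\<close> by blast+
    then show "A \<in> (\<lambda>v. insert v e) ` ?U"
      by blast
  qed
  have "card (cliques k V (k-1) (insert e X))
        = card (cliques k V (k-1) (insert e X) \<inter> cliques k V (k-1) X)
          + card (cliques k V (k-1) (insert e X) - cliques k V (k-1) X)"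
    by (rule card_Int_Diff[OF finite_cliques[OF assms(1)]])
  also have "\<dots> \<le> card (cliques k V (k-1) X)
                   + card (cliques k V (k-1) (insert e X) - cliques k V (k-1) X)"
    by (intro add_right_mono card_mono finite_cliques[OF assms(1)]) auto
  also have "\<dots> \<le> card (cliques k V (k-1) X) + card ((\<lambda>v. insert v e) ` ?U)"
    using new assms(1) by (intro add_left_mono card_mono) auto
  also have "\<dots> \<le> card (cliques k V (k-1) X) + card ?U"
    using card_image_le[OF assms(1)] by simp
  finally show ?thesis .
qed

lemma exists_subset_value_between:
  fixes g :: "'a set \<Rightarrow> nat"
  assumes "finite E" and "0 \<le> c" and step: "\<And>x Y. x \<in> E \<Longrightarrow> real (g (insert x Y)) \<le> real (g Y) + c"
    and "real (g Q) \<le> T" and "T \<le> real (g (Q \<union> E))"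
  shows "\<exists>X\<subseteq>E. T \<le> real (g (Q \<union> X)) \<and> real (g (Q \<union> X)) \<le> T + c"
  using assms(1) step assms(5)
proof (induction E rule: finite_induct)
  case empty
  then show ?case
    using assms(2,4) by auto
next
  case (insert x F)
  show ?case
  proof (cases "T \<le> real (g (Q \<union> F))")
    case True
    then show ?thesis
      using insert.IH insert.prems(1) by blast
  next
    case False
    have "real (g (Q \<union> insert x F)) \<le> real (g (Q \<union> F)) + c"
      using insert.prems(1)[of x "Q \<union> F"] by simp
    then show ?thesis
      using False insert.prems(2) by (intro exI[of _ "insert x F"]) auto
  qed
qed

lemma exists_enlargement_above_threshold:
  assumes "finite (\<Union>i\<in>{1..k}. V i)" and "1 \<le> k" and "kj_graph k V (k-1) H" and "Q \<subseteq> H"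
    and "T \<le> real (card (cliques k V (k-1) H))"
  obtains Q' where "Q \<subseteq> Q'" and "Q' \<subseteq> H" and "T \<le> real (card (cliques k V (k-1) Q'))"
    and "real (card (cliques k V (k-1) Q'))
           \<le> max (real (card (cliques k V (k-1) Q))) (T + real (card (\<Union>i\<in>{1..k}. V i)))"
proof (cases "T \<le> real (card (cliques k V (k-1) Q))")
  case True
  then show ?thesis
    using \<open>Q \<subseteq> H\<close> by (intro that[of Q]) auto
next
  case False
  have "\<exists>X\<subseteq>H - Q. T \<le> real (card (cliques k V (k-1) (Q \<union> X)))
          \<and> real (card (cliques k V (k-1) (Q \<union> X))) \<le> T + real (card (\<Union>i\<in>{1..k}. V i))"
  proof (rule exists_subset_value_between)
    show "finite (H - Q)"
      using finite_kj_graph[OF assms(1,3)] by simp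
    show "real (card (cliques k V (k-1) (insert e Y)))
            \<le> real (card (cliques k V (k-1) Y)) + real (card (\<Union>i\<in>{1..k}. V i))"
      if "e \<in> H - Q" for e Y
    proof -
      have "card e = k - 1"
        using that assms(3) by (auto simp: kj_graph_def)
      from card_cliques_insert_le[OF assms(1) this \<open>1 \<le> k\<close>, of Y] show ?thesis
        by (metis of_nat_add of_nat_le_iff)
    qed
    show "T \<le> real (card (cliques k V (k-1) (Q \<union> (H - Q))))"
      using assms(4,5) by (simp add: Un_absorb1)
  qed (use False in auto)
  then obtain X where "X \<subseteq> H - Q" and "T \<le> real (card (cliques k V (k-1) (Q \<union> X)))"
    and "real (card (cliques k V (k-1) (Q \<union> X))) \<le> T + real (card (\<Union>i\<in>{1..k}. V i))"
    by blast
  then show ?thesis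
    using \<open>Q \<subseteq> H\<close> by (intro that[of "Q \<union> X"]) auto
qed

lemma partitions_labelling:
  assumes "partitions s P X"
  obtains h where "\<And>x. x \<in> X \<Longrightarrow> h x \<in> {1..s}"
    and "\<And>x i. x \<in> X \<Longrightarrow> i \<in> {1..s} \<Longrightarrow> x \<in> P i \<longleftrightarrow> h x = i"
proof -
  have disj: "disjoint_family_on P {1..s}" and cover: "(\<Union>i\<in>{1..s}. P i) = X"
    using assms by (simp_all add: partitions_def)
  define h where "h x = (SOME i. i \<in> {1..s} \<and> x \<in> P i)" for x
  have ex: "\<exists>i. i \<in> {1..s} \<and> x \<in> P i" if "x \<in> X" for x
    using that cover by blast
  have h: "h x \<in> {1..s} \<and> x \<in> P (h x)" if "x \<in> X" for x
    unfolding h_def using ex[OF that] by (rule someI_ex)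
  have "x \<in> P i \<longleftrightarrow> h x = i" if "x \<in> X" and "i \<in> {1..s}" for x i
  proof
    assume "x \<in> P i"
    show "h x = i"
    proof (rule ccontr)
      assume "h x \<noteq> i"
      then have "P (h x) \<inter> P i = {}"
        using h[OF \<open>x \<in> X\<close>] \<open>i \<in> {1..s}\<close> by (intro disjoint_family_onD[OF disj]) auto
      then show False
        using h[OF \<open>x \<in> X\<close>] \<open>x \<in> P i\<close> by blast
    qed
  next
    assume "h x = i"
    then show "x \<in> P i"
      using h[OF \<open>x \<in> X\<close>] by simp
  qed
  with h show ?thesis
    using that by blast
qed

lemma partitions_fibres:
  assumes "\<And>x. x \<in> X \<Longrightarrow> h x \<in> {1..s}"
  shows "partitions s (\<lambda>i. {x\<in>X. h x = i}) X"
  unfolding partitions_def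
proof
  show "disjoint_family_on (\<lambda>i. {x\<in>X. h x = i}) {1..s}"
    by (auto simp: disjoint_family_on_def)
  show "(\<Union>i\<in>{1..s}. {x\<in>X. h x = i}) = X"
    using assms by blast
qed

section \<open>Regularity\<close>

lemma abs_card_Int_subset_le:
  fixes d e :: real
  assumes "finite S'" and "S \<subseteq> S'" and "0 \<le> d" and "d \<le> 1"
    and "\<bar>real (card (A \<inter> S')) - d * real (card S')\<bar> \<le> e"
  shows "\<bar>real (card (A \<inter> S)) - d * real (card S)\<bar> \<le> e + real (card (S' - S))"
proof -
  have "finite S"
    using assms(1,2) finite_subset by blast
  have S': "real (card S') = real (card S) + real (card (S' - S))"
    using card_Diff_subset[OF \<open>finite S\<close> \<open>S \<subseteq> S'\<close>] card_mono[OF assms(1,2)] by simp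
  have "A \<inter> S' = (A \<inter> S) \<union> (A \<inter> (S' - S))"
    using \<open>S \<subseteq> S'\<close> by auto
  moreover have "card ((A \<inter> S) \<union> (A \<inter> (S' - S))) = card (A \<inter> S) + card (A \<inter> (S' - S))"
    by (rule card_Un_disjoint) (use \<open>finite S\<close> assms(1) in auto)
  ultimately have AS': "real (card (A \<inter> S')) = real (card (A \<inter> S)) + real (card (A \<inter> (S' - S)))"
    by simp
  have "card (A \<inter> (S' - S)) \<le> card (S' - S)"
    using assms(1) by (intro card_mono) auto
  moreover have "d * real (card (S' - S)) \<le> real (card (S' - S))"
    by (intro mult_left_le_one_le) (use assms(3,4) in auto)
  moreover have "0 \<le> d * real (card (S' - S))"
    using assms(3) by simp
  ultimately have change: "\<bar>real (card (A \<inter> (S' - S))) - d * real (card (S' - S))\<bar> \<le> real (card (S' - S))"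
    by linarith
  have "d * real (card S') = d * real (card S) + d * real (card (S' - S))"
    using S' by (simp add: distrib_left)
  then have "real (card (A \<inter> S)) - d * real (card S)
        = (real (card (A \<inter> S')) - d * real (card S'))
          - (real (card (A \<inter> (S' - S))) - d * real (card (S' - S)))"
    using AS' by linarith
  then have "\<bar>real (card (A \<inter> S)) - d * real (card S)\<bar>
        = \<bar>(real (card (A \<inter> S')) - d * real (card S'))
          - (real (card (A \<inter> (S' - S))) - d * real (card (S' - S)))\<bar>"
    by (simp only:)
  also have "\<dots> \<le> \<bar>real (card (A \<inter> S')) - d * real (card S')\<bar>
          + \<bar>real (card (A \<inter> (S' - S))) - d * real (card (S' - S))\<bar>"
    by (rule abs_triangle_ineq4)
  also have "\<dots> \<le> e + real (card (S' - S))"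
    using assms(5) change by (rule add_mono)
  finally show ?thesis .
qed

lemma regular_wrt_below_threshold:
  fixes \<epsilon> \<delta> d :: real
  assumes "finite (\<Union>i\<in>{1..k}. V i)" and "1 \<le> k" and "kj_graph k V (k-1) H"
    and reg: "regular_wrt k V (\<epsilon> + \<delta>) d A H"
    and "0 < \<epsilon>" and "0 \<le> \<delta>" and "\<epsilon> + \<delta> \<le> 1" and "0 \<le> d" and "d \<le> 1"
    and vertices: "real (card (\<Union>i\<in>{1..k}. V i)) \<le> \<delta> * real (card (cliques k V (k-1) H))"
    and "Q \<subseteq> H" and large: "\<epsilon> * real (card (cliques k V (k-1) H)) \<le> real (card (cliques k V (k-1) Q))"
  shows "\<bar>real (card (A \<inter> cliques k V (k-1) Q)) - d * real (card (cliques k V (k-1) Q))\<bar>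
           \<le> (\<epsilon> + 5 * \<delta> / \<epsilon>) * real (card (cliques k V (k-1) Q))"
proof -
  let ?cl = "cliques k V (k-1)"
  define N where "N = real (card (?cl H))"
  define x where "x = real (card (?cl Q))"
  have "(\<epsilon> + \<delta>) * N \<le> N"
    using \<open>0 < \<epsilon>\<close> \<open>0 \<le> \<delta>\<close> \<open>\<epsilon> + \<delta> \<le> 1\<close> by (intro mult_left_le_one_le) (auto simp: N_def)
  then obtain Q' where "Q \<subseteq> Q'" and "Q' \<subseteq> H" and above: "(\<epsilon> + \<delta>) * N \<le> real (card (?cl Q'))"
    and below: "real (card (?cl Q'))
                  \<le> max x ((\<epsilon> + \<delta>) * N + real (card (\<Union>i\<in>{1..k}. V i)))"
    using exists_enlargement_above_threshold[OF assms(1-3) \<open>Q \<subseteq> H\<close>]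
    unfolding N_def x_def by blast
  define D where "D = real (card (?cl Q' - ?cl Q))"
  have sub: "?cl Q \<subseteq> ?cl Q'"
    by (rule cliques_mono) fact
  have fin: "finite (?cl Q')"
    by (rule finite_cliques) fact
  have size: "real (card (?cl Q')) = x + D"
    using card_Diff_subset[OF finite_subset[OF sub fin] sub] card_mono[OF fin sub]
    by (simp add: x_def D_def)
  have "\<bar>real (card (A \<inter> ?cl Q')) - d * real (card (?cl Q'))\<bar> \<le> (\<epsilon> + \<delta>) * real (card (?cl Q'))"
    using reg \<open>Q' \<subseteq> H\<close> above unfolding regular_wrt_def N_def by blast
  then have err: "\<bar>real (card (A \<inter> ?cl Q)) - d * x\<bar> \<le> (\<epsilon> + \<delta>) * (x + D) + D"
    using abs_card_Int_subset_le[OF fin sub \<open>0 \<le> d\<close> \<open>d \<le> 1\<close>] size by (simp add: x_def D_def)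
  have "\<epsilon> * N \<le> x"
    using large by (simp add: N_def x_def)
  have "\<delta> * N = \<delta> * (\<epsilon> * N) / \<epsilon>"
    using \<open>0 < \<epsilon>\<close> by simp
  also have "\<dots> \<le> \<delta> * x / \<epsilon>"
    using \<open>\<epsilon> * N \<le> x\<close> \<open>0 < \<epsilon>\<close> \<open>0 \<le> \<delta>\<close> by (intro divide_right_mono mult_left_mono) auto
  finally have \<delta>N: "\<delta> * N \<le> \<delta> / \<epsilon> * x"
    by simp
  have "D \<le> \<delta> * N + \<delta> * N"
  proof (cases "real (card (?cl Q')) \<le> x")
    case True
    moreover have "0 \<le> \<delta> * N"
      using \<open>0 \<le> \<delta>\<close> by (simp add: N_def)
    ultimately show ?thesis
      using size by linarith
  next
    case False
    then show ?thesis
      using below size \<open>\<epsilon> * N \<le> x\<close> vertices by (simp add: N_def algebra_simps)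
  qed
  then have D: "D \<le> 2 * (\<delta> / \<epsilon> * x)"
    using \<delta>N by linarith
  have shrink: "(\<epsilon> + \<delta>) * D \<le> D"
    using \<open>0 < \<epsilon>\<close> \<open>0 \<le> \<delta>\<close> \<open>\<epsilon> + \<delta> \<le> 1\<close> by (intro mult_left_le_one_le) (auto simp: D_def)
  have \<delta>x: "\<delta> * x \<le> \<delta> / \<epsilon> * x"
    using \<open>0 < \<epsilon>\<close> \<open>0 \<le> \<delta>\<close> \<open>\<epsilon> + \<delta> \<le> 1\<close>
    by (intro mult_right_mono) (auto simp: x_def field_simps mult_left_le)
  have "(\<epsilon> + \<delta>) * (x + D) + D = \<epsilon> * x + \<delta> * x + ((\<epsilon> + \<delta>) * D + D)"
    by (simp add: algebra_simps)
  also have "\<dots> \<le> \<epsilon> * x + \<delta> / \<epsilon> * x + 4 * (\<delta> / \<epsilon> * x)"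
    using shrink \<delta>x D by linarith
  also have "\<dots> = (\<epsilon> + 5 * \<delta> / \<epsilon>) * x"
    by (simp add: algebra_simps)
  finally have "(\<epsilon> + \<delta>) * (x + D) + D \<le> (\<epsilon> + 5 * \<delta> / \<epsilon>) * x" .
  then show ?thesis
    using err by (simp add: x_def)
qed

lemma abs_diff_mixture_le:
  fixes x y a \<gamma> t e :: real
  assumes "\<bar>x - ((1 - \<gamma>) * y + \<gamma> * a)\<bar> \<le> t" and "\<bar>y - a\<bar> \<le> e" and "0 \<le> \<gamma>" and "\<gamma> \<le> 1"
  shows "\<bar>x - a\<bar> \<le> t + (1 - \<gamma>) * e"
proof -
  have "x - a = (x - ((1 - \<gamma>) * y + \<gamma> * a)) + (1 - \<gamma>) * (y - a)"
    by (simp add: algebra_simps)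
  then have "\<bar>x - a\<bar> = \<bar>(x - ((1 - \<gamma>) * y + \<gamma> * a)) + (1 - \<gamma>) * (y - a)\<bar>"
    by (simp only:)
  also have "\<dots> \<le> \<bar>x - ((1 - \<gamma>) * y + \<gamma> * a)\<bar> + (1 - \<gamma>) * \<bar>y - a\<bar>"
    using abs_triangle_ineq[of "x - ((1 - \<gamma>) * y + \<gamma> * a)" "(1 - \<gamma>) * (y - a)"] assms(4)
    by (simp add: abs_mult)
  also have "\<dots> \<le> t + (1 - \<gamma>) * e"
    using assms by (intro add_mono mult_left_mono) auto
  finally show ?thesis .
qed

lemma mixing_error_le:
  fixes x y a c \<gamma> \<epsilon> \<delta> :: real
  assumes "\<bar>x - ((1 - \<gamma>) * y + \<gamma> * (a * c))\<bar> \<le> \<gamma> * \<epsilon> / 4 * c"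
    and "\<bar>y - a * c\<bar> \<le> (\<epsilon> + 5 * \<delta> / \<epsilon>) * c"
    and "0 \<le> \<gamma>" and "\<gamma> \<le> 1" and "0 < \<epsilon>" and "0 \<le> \<delta>" and "\<delta> \<le> \<gamma> * \<epsilon>\<^sup>2 / 10" and "0 \<le> c"
  shows "\<bar>x - a * c\<bar> \<le> \<epsilon> * c"
proof -
  have "5 * \<delta> / \<epsilon> \<le> 5 * (\<gamma> * \<epsilon>\<^sup>2 / 10) / \<epsilon>"
    using assms(5,7) by (intro divide_right_mono) auto
  also have "\<dots> = \<gamma> * \<epsilon> / 2"
    using assms(5) by (simp add: power2_eq_square)
  finally have a: "5 * \<delta> / \<epsilon> \<le> \<gamma> * \<epsilon> / 2" .
  have "(1 - \<gamma>) * (5 * \<delta> / \<epsilon>) \<le> 5 * \<delta> / \<epsilon>"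
    using assms(3-6) by (intro mult_left_le_one_le) auto
  moreover have "(1 - \<gamma>) * (\<epsilon> + 5 * \<delta> / \<epsilon>) = \<epsilon> - \<gamma> * \<epsilon> + (1 - \<gamma>) * (5 * \<delta> / \<epsilon>)"
    by (simp add: algebra_simps)
  moreover have "0 \<le> \<gamma> * \<epsilon>"
    using assms(3,5) by simp
  ultimately have "\<gamma> * \<epsilon> / 4 + (1 - \<gamma>) * (\<epsilon> + 5 * \<delta> / \<epsilon>) \<le> \<epsilon>"
    using a by linarith
  then have "\<gamma> * \<epsilon> / 4 * c + (1 - \<gamma>) * ((\<epsilon> + 5 * \<delta> / \<epsilon>) * c) \<le> \<epsilon> * c"
    using assms(8) by (metis distrib_right mult.assoc mult_right_mono)
  with abs_diff_mixture_le[OF assms(1,2,3,4)] show ?thesis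
    by linarith
qed

lemma regular_wrt_if_density_far_from_bounds:
  fixes \<epsilon> d :: real
  assumes "finite (\<Union>i\<in>{1..k}. V i)" and "1 - \<epsilon> \<le> d" and "d \<le> \<epsilon>"
  shows "regular_wrt k V \<epsilon> d A H"
  unfolding regular_wrt_def
proof (intro allI impI)
  fix Q
  let ?c = "real (card (cliques k V (k-1) Q))"
  have "card (A \<inter> cliques k V (k-1) Q) \<le> card (cliques k V (k-1) Q)"
    using finite_cliques[OF assms(1)] by (intro card_mono) auto
  moreover have "d * ?c \<le> \<epsilon> * ?c" and "(1 - \<epsilon>) * ?c \<le> d * ?c"
    using assms(2,3) by (simp_all add: mult_right_mono)
  ultimately show "\<bar>real (card (A \<inter> cliques k V (k-1) Q)) - d * ?c\<bar> \<le> \<epsilon> * ?c"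
    by (simp add: abs_le_iff algebra_simps)
qed

lemma regular_wrt_cliques:
  fixes \<epsilon> :: real
  assumes "0 \<le> \<epsilon>"
  shows "regular_wrt k V \<epsilon> 1 (cliques k V (k-1) H) H"
  unfolding regular_wrt_def
proof (intro allI impI)
  fix Q assume "Q \<subseteq> H \<and> \<epsilon> * real (card (cliques k V (k-1) H)) \<le> real (card (cliques k V (k-1) Q))"
  then have "cliques k V (k-1) H \<inter> cliques k V (k-1) Q = cliques k V (k-1) Q"
    using cliques_mono by blast
  then show "\<bar>real (card (cliques k V (k-1) H \<inter> cliques k V (k-1) Q)) - 1 * real (card (cliques k V (k-1) Q))\<bar>
             \<le> \<epsilon> * real (card (cliques k V (k-1) Q))"
    using assms by simp
qed

section \<open>Refining the partition\<close>

lemma union_bound_for_relabelling: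
  fixes \<nu> \<epsilon> \<kappa> :: real
  assumes "1 \<le> s" and "2 \<le> k" and "0 < m" and n_le: "real n \<le> \<kappa> * real m ^ (k - 1)"
    and m_large: "3 * real s + \<kappa> < \<nu>\<^sup>2 * \<epsilon>^4 / (32 * \<kappa>\<^sup>2) * real m"
  shows "2 * (real s * 2 ^ n + 1) * exp (- (\<nu>\<^sup>2 * \<epsilon>^4 * real m ^ k / (32 * \<kappa>\<^sup>2))) < 1"
proof (rule union_bound_below_one[OF \<open>1 \<le> s\<close>])
  define L where "L = real m ^ (k - 1)"
  have "1 \<le> real m"
    using \<open>0 < m\<close> by simp
  then have "1 \<le> L"
    unfolding L_def by (rule one_le_power)
  have "3 * real s * 1 \<le> 3 * real s * L"
    using \<open>1 \<le> L\<close> by (intro mult_left_mono) auto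
  moreover have "1 \<le> real s"
    using \<open>1 \<le> s\<close> by simp
  ultimately have "2 + real s + real n \<le> 3 * real s * L + \<kappa> * L"
    using n_le[folded L_def] by linarith
  also have "\<dots> = (3 * real s + \<kappa>) * L"
    by (simp add: distrib_right)
  also have "\<dots> < \<nu>\<^sup>2 * \<epsilon>^4 / (32 * \<kappa>\<^sup>2) * real m * L"
    using m_large \<open>1 \<le> L\<close> by (intro mult_strict_right_mono) auto
  also have "\<dots> = \<nu>\<^sup>2 * \<epsilon>^4 * real m ^ k / (32 * \<kappa>\<^sup>2)"
  proof -
    have "k = Suc (k - 1)"
      using \<open>2 \<le> k\<close> by simp
    then have "real m * L = real m ^ k"
      unfolding L_def by (metis power_Suc)
    then show ?thesis
      by (simp flip: \<open>real m * L = real m ^ k\<close> add: ac_simps)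
  qed
  finally show "2 + real s + real n < \<nu>\<^sup>2 * \<epsilon>^4 * real m ^ k / (32 * \<kappa>\<^sup>2)" .
qed

lemma good_relabelling_exists:
  fixes \<epsilon> \<nu> :: real and d :: "nat \<Rightarrow> real" and h :: "'a set \<Rightarrow> nat"
  assumes "2 \<le> k" and "1 \<le> s" and "0 < m" and "0 < \<epsilon>" and "\<epsilon> \<le> 1" and "0 < \<nu>" and "\<nu> \<le> 1"
    and d: "\<And>i. i \<in> {1..s} \<Longrightarrow> 0 \<le> d i" "(\<Sum>i=1..s. d i) = 1"
    and vc: "vertex_classes m k V" and kjH: "kj_graph k V (k-1) H"
    and many: "\<epsilon> * real m ^ k \<le> real (card (cliques k V (k-1) H))"
    and h: "\<And>K. K \<in> cliques k V (k-1) H \<Longrightarrow> h K \<in> {1..s}"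
    and m_large: "3 * real s + real ((2*k)^k) < \<nu>\<^sup>2 * \<epsilon>^4 / (32 * (real ((2*k)^k))\<^sup>2) * real m"
  defines "\<gamma> \<equiv> \<nu> / (2 * real ((2*k)^k))"
  shows "\<exists>\<omega>. (\<forall>K\<in>cliques k V (k-1) H. \<omega> K \<in> {0..s}) \<and>
    real (card {K\<in>cliques k V (k-1) H. \<omega> K \<noteq> 0}) < \<nu> * real m ^ k \<and>
    (\<forall>i\<in>{1..s}. \<forall>Q. Q \<subseteq> H \<and> \<epsilon> * real (card (cliques k V (k-1) H)) \<le> real (card (cliques k V (k-1) Q)) \<longrightarrow>
      \<bar>real (card {K\<in>cliques k V (k-1) Q. relabel (h K) (\<omega> K) = i})
       - ((1 - \<gamma>) * real (card {K\<in>cliques k V (k-1) Q. h K = i})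
          + \<gamma> * d i * real (card (cliques k V (k-1) Q)))\<bar>
      < \<gamma> * \<epsilon> / 4 * real (card (cliques k V (k-1) Q)))"
proof -
  let ?cl = "cliques k V (k-1)"
  define C where "C = ?cl H"
  define N where "N = real (card C)"
  define M where "M = real m ^ k"
  define \<kappa> where "\<kappa> = real ((2*k)^k)"
  have \<gamma>_\<kappa>: "\<gamma> = \<nu> / (2 * \<kappa>)"
    unfolding \<gamma>_def \<kappa>_def ..
  define \<beta> where "\<beta> = \<nu>\<^sup>2 * \<epsilon>^4 * M / (32 * \<kappa>\<^sup>2)"
  define SS where "SS = ?cl ` {Q. Q \<subseteq> H \<and> \<epsilon> * N \<le> real (card (?cl Q))}"
  have finU: "finite (\<Union>i\<in>{1..k}. V i)"
    by (rule finite_vertices[OF vc \<open>0 < m\<close>])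
  have "finite C"
    unfolding C_def by (rule finite_cliques[OF finU])
  have "finite H"
    by (rule finite_kj_graph[OF finU kjH])
  have \<kappa>1: "1 \<le> \<kappa>"
    unfolding \<kappa>_def by (rule one_le_double_power)
  have "card C \<le> (2 * k) ^ k * m ^ k"
    unfolding C_def by (rule card_cliques_le[OF vc \<open>0 < m\<close>])
  then have N_le: "N \<le> \<kappa> * M"
    unfolding N_def \<kappa>_def M_def by (metis of_nat_le_iff of_nat_mult of_nat_power)
  have "card H \<le> (2 * k) ^ (k-1) * m ^ (k-1)"
    by (rule card_kj_graph_le[OF vc \<open>0 < m\<close> kjH])
  also have "\<dots> \<le> (2 * k) ^ k * m ^ (k-1)"
    using \<open>2 \<le> k\<close> by (intro mult_right_mono power_increasing) auto
  finally have H_le: "real (card H) \<le> \<kappa> * real m ^ (k-1)"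
    unfolding \<kappa>_def by (metis of_nat_le_iff of_nat_mult of_nat_power)
  have "0 < M"
    using \<open>0 < m\<close> by (simp add: M_def)
  have "\<epsilon> * M \<le> N"
    using many by (simp add: M_def N_def C_def)
  moreover have "0 < \<epsilon> * M"
    using \<open>0 < M\<close> \<open>0 < \<epsilon>\<close> by simp
  ultimately have "0 < N"
    by linarith
  then have "C \<noteq> {}"
    by (auto simp: N_def)
  have "finite SS" and "card SS \<le> 2 ^ card H"
    unfolding SS_def using \<open>finite H\<close> by (simp, rule card_image_subsets_le)
  have \<beta>1: "\<beta> \<le> 2 * (\<gamma> * \<epsilon> / 4)\<^sup>2 * (\<epsilon> * N)"
  proof -
    have "\<beta> = 2 * (\<gamma> * \<epsilon> / 4)\<^sup>2 * (\<epsilon> * (\<epsilon> * M))"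
      using \<kappa>1 by (simp add: \<beta>_def \<gamma>_\<kappa> power2_eq_square eval_nat_numeral field_simps)
    also have "\<dots> \<le> 2 * (\<gamma> * \<epsilon> / 4)\<^sup>2 * (\<epsilon> * N)"
      using \<open>\<epsilon> * M \<le> N\<close> \<open>0 < \<epsilon>\<close> by (intro mult_left_mono) auto
    finally show ?thesis .
  qed
  have \<beta>2: "\<beta> * real (card C) \<le> 2 * (\<nu> * M / 2)\<^sup>2"
  proof -
    have "\<beta> * N \<le> \<beta> * (\<kappa> * M)"
      using N_le \<open>0 < M\<close> \<open>0 < \<nu>\<close> \<open>0 < \<epsilon>\<close> by (intro mult_left_mono) (auto simp: \<beta>_def)
    also have "\<dots> = (\<nu> * M)\<^sup>2 * (\<epsilon>^4 / (32 * \<kappa>))"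
      using \<kappa>1 by (simp add: \<beta>_def power2_eq_square eval_nat_numeral field_simps)
    also have "\<dots> \<le> (\<nu> * M)\<^sup>2 * (1 / 2)"
      using \<kappa>1 \<open>0 < \<epsilon>\<close> \<open>\<epsilon> \<le> 1\<close> power_le_one[of \<epsilon> 4]
      by (intro mult_left_mono) (auto simp: field_simps)
    finally show ?thesis
      by (simp add: N_def power2_eq_square ac_simps)
  qed
  have "2 * (real s * 2 ^ card H + 1) * exp (- \<beta>) < 1"
    using union_bound_for_relabelling[OF \<open>1 \<le> s\<close> \<open>2 \<le> k\<close> \<open>0 < m\<close> H_le[unfolded \<kappa>_def]
        m_large] by (simp add: \<beta>_def M_def \<kappa>_def)
  moreover have "real (card SS) \<le> 2 ^ card H"
    using \<open>card SS \<le> 2 ^ card H\<close> by (metis of_nat_le_iff of_nat_numeral of_nat_power)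
  then have "2 * (real s * real (card SS) + 1) * exp (- \<beta>) \<le> 2 * (real s * 2 ^ card H + 1) * exp (- \<beta>)"
    by (intro mult_right_mono mult_left_mono add_right_mono) auto
  ultimately have small: "2 * (real s * real (card SS) + 1) * exp (- \<beta>) < 1"
    by linarith
  have \<gamma>: "0 \<le> \<gamma>" "\<gamma> \<le> 1"
    using \<kappa>1 \<open>0 < \<nu>\<close> \<open>\<nu> \<le> 1\<close> by (simp_all add: \<gamma>_\<kappa> field_simps)
  have SS: "\<And>S. S \<in> SS \<Longrightarrow> S \<subseteq> C \<and> \<epsilon> * N \<le> real (card S)"
    unfolding SS_def C_def using cliques_mono by blast
  have pos: "0 < \<epsilon> * N" "0 \<le> \<gamma> * \<epsilon> / 4" "0 \<le> \<nu> * M / 2"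
    using \<open>0 < N\<close> \<open>0 < \<epsilon>\<close> \<open>0 < \<nu>\<close> \<open>0 < M\<close> \<gamma> by simp_all
  from random_relabelling_exists[where h = h and SS = SS and d = d, OF \<open>finite C\<close> \<open>C \<noteq> {}\<close> h[folded C_def] \<open>finite SS\<close> SS pos(1) \<gamma> d
      pos(2,3) \<beta>1 \<beta>2 small]
  obtain \<omega> where range: "\<forall>K\<in>C. \<omega> K \<in> {0..s}"
    and changes: "real (card {K\<in>C. \<omega> K \<noteq> 0}) < \<gamma> * real (card C) + \<nu> * M / 2"
    and conc: "\<forall>i\<in>{1..s}. \<forall>S\<in>SS. \<bar>real (card {K\<in>S. relabel (h K) (\<omega> K) = i})
       - ((1 - \<gamma>) * real (card {K\<in>S. h K = i}) + \<gamma> * d i * real (card S))\<bar> < \<gamma> * \<epsilon> / 4 * real (card S)"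
    by blast
  have "\<gamma> * real (card C) + \<nu> * M / 2 \<le> \<nu> * M"
  proof -
    have "\<gamma> * N \<le> \<gamma> * (\<kappa> * M)"
      using N_le \<open>0 \<le> \<gamma>\<close> by (rule mult_left_mono)
    also have "\<dots> = \<nu> * M / 2"
      using \<kappa>1 by (simp add: \<gamma>_\<kappa>)
    finally show ?thesis
      by (simp add: N_def)
  qed
  then have "real (card {K\<in>C. \<omega> K \<noteq> 0}) < \<nu> * real m ^ k"
    using changes by (simp add: M_def)
  moreover have "\<And>Q. Q \<subseteq> H \<and> \<epsilon> * N \<le> real (card (?cl Q)) \<Longrightarrow> ?cl Q \<in> SS"
    unfolding SS_def by blast
  ultimately show ?thesis
    using range conc unfolding C_def N_def by blast
qed

lemma regular_refinement_exists:
  fixes \<epsilon> \<nu> \<delta> :: real and d :: "nat \<Rightarrow> real" and Hs :: "nat \<Rightarrow> 'a set set"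
  assumes "2 \<le> k" and "1 \<le> s" and "0 < m" and "0 < \<epsilon>" and "0 < \<nu>" and "\<nu> \<le> 1"
    and "0 < \<delta>" and "\<epsilon> + \<delta> \<le> 1"
    and d: "\<And>i. i \<in> {1..s} \<Longrightarrow> 0 \<le> d i" "(\<Sum>i=1..s. d i) = 1"
    and vc: "vertex_classes m k V" and kjH: "kj_graph k V (k-1) H"
    and many: "\<epsilon> * real m ^ k \<le> real (card (cliques k V (k-1) H))"
    and part: "partitions s Hs (cliques k V (k-1) H)"
    and reg: "\<And>i. i \<in> {1..s} \<Longrightarrow> regular_wrt k V (\<epsilon> + \<delta>) (d i) (Hs i) H"
    and \<delta>_small: "\<delta> \<le> \<nu> * \<epsilon>\<^sup>2 / (20 * real ((2*k)^k))"
    and m_large1: "2 * real k \<le> \<delta> * \<epsilon> * real m"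
    and m_large2: "3 * real s + real ((2*k)^k) < \<nu>\<^sup>2 * \<epsilon>^4 / (32 * (real ((2*k)^k))\<^sup>2) * real m"
  shows "\<exists>G. (\<forall>i\<in>{1..s}. kj_graph k V k (G i)) \<and> partitions s G (cliques k V (k-1) H) \<and>
      (\<forall>i\<in>{1..s}. regular_wrt k V \<epsilon> (d i) (G i) H) \<and>
      (\<forall>i\<in>{1..s}. real (card ((G i - Hs i) \<union> (Hs i - G i))) \<le> \<nu> * real m ^ k)"
proof -
  let ?cl = "cliques k V (k-1)"
  define C where "C = ?cl H"
  define \<gamma> where "\<gamma> = \<nu> / (2 * real ((2*k)^k))"
  have finU: "finite (\<Union>i\<in>{1..k}. V i)"
    by (rule finite_vertices[OF vc \<open>0 < m\<close>])
  have "finite C"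
    unfolding C_def by (rule finite_cliques[OF finU])
  obtain h where h: "\<And>K. K \<in> C \<Longrightarrow> h K \<in> {1..s}"
    and h_iff: "\<And>K i. K \<in> C \<Longrightarrow> i \<in> {1..s} \<Longrightarrow> K \<in> Hs i \<longleftrightarrow> h K = i"
    using partitions_labelling[OF part] unfolding C_def by blast
  have "\<epsilon> \<le> 1"
    using \<open>0 < \<delta>\<close> \<open>\<epsilon> + \<delta> \<le> 1\<close> by linarith
  have vertices: "real (card (\<Union>i\<in>{1..k}. V i)) \<le> \<delta> * real (card (?cl H))"
    using card_vertices_le_fraction[OF vc \<open>2 \<le> k\<close> \<open>0 < m\<close> _ \<open>0 < \<epsilon>\<close> m_large1 many] \<open>0 < \<delta>\<close> by simp
  have \<gamma>: "0 \<le> \<gamma>" "\<gamma> \<le> 1" "\<delta> \<le> \<gamma> * \<epsilon>\<^sup>2 / 10"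
    using one_le_double_power[of k] \<open>0 < \<nu>\<close> \<open>\<nu> \<le> 1\<close> \<delta>_small by (simp_all add: \<gamma>_def field_simps)
  have d_le_1: "d i \<le> 1" if "i \<in> {1..s}" for i
  proof -
    have "d i \<le> (\<Sum>j=1..s. d j)"
      using d(1) that by (intro member_le_sum) auto
    then show ?thesis
      using d(2) by simp
  qed
  obtain \<omega> where range: "\<forall>K\<in>C. \<omega> K \<in> {0..s}"
    and changes: "real (card {K\<in>C. \<omega> K \<noteq> 0}) < \<nu> * real m ^ k"
    and conc: "\<And>i Q. i \<in> {1..s} \<Longrightarrow> Q \<subseteq> H \<Longrightarrow> \<epsilon> * real (card C) \<le> real (card (?cl Q)) \<Longrightarrow>
      \<bar>real (card {K\<in>?cl Q. relabel (h K) (\<omega> K) = i})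
       - ((1 - \<gamma>) * real (card {K\<in>?cl Q. h K = i}) + \<gamma> * d i * real (card (?cl Q)))\<bar>
      < \<gamma> * \<epsilon> / 4 * real (card (?cl Q))"
    using good_relabelling_exists[where h = h, OF \<open>2 \<le> k\<close> \<open>1 \<le> s\<close> \<open>0 < m\<close> \<open>0 < \<epsilon>\<close> \<open>\<epsilon> \<le> 1\<close>
        \<open>0 < \<nu>\<close> \<open>\<nu> \<le> 1\<close> d vc kjH many h[unfolded C_def] m_large2]
    unfolding \<gamma>_def[symmetric] C_def[symmetric] by blast
  define G where "G i = {K\<in>C. relabel (h K) (\<omega> K) = i}" for i
  have "relabel (h K) (\<omega> K) \<in> {1..s}" if "K \<in> C" for K
    using range h that by (auto simp: relabel_def)
  then have "partitions s G C"
    unfolding G_def by (rule partitions_fibres)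
  moreover have "kj_graph k V k (G i)" for i
    by (rule kj_graph_if_subset_cliques[of _ k V "k-1" H]) (auto simp: G_def C_def)
  moreover have "real (card ((G i - Hs i) \<union> (Hs i - G i))) \<le> \<nu> * real m ^ k" if "i \<in> {1..s}" for i
  proof -
    have "Hs i \<subseteq> C"
      using part that unfolding partitions_def C_def by blast
    then have "(G i - Hs i) \<union> (Hs i - G i) \<subseteq> {K\<in>C. \<omega> K \<noteq> 0}"
      using h_iff[OF _ that] by (auto simp: G_def relabel_def)
    then have "card ((G i - Hs i) \<union> (Hs i - G i)) \<le> card {K\<in>C. \<omega> K \<noteq> 0}"
      using \<open>finite C\<close> by (intro card_mono) auto
    then show ?thesis
      using changes by linarith
  qed
  moreover have "regular_wrt k V \<epsilon> (d i) (G i) H" if i: "i \<in> {1..s}" for i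
    unfolding regular_wrt_def
  proof (intro allI impI, elim conjE)
    fix Q assume "Q \<subseteq> H" and large: "\<epsilon> * real (card (?cl H)) \<le> real (card (?cl Q))"
    have "?cl Q \<subseteq> C"
      unfolding C_def by (rule cliques_mono) fact
    then have G_Q: "{K\<in>?cl Q. relabel (h K) (\<omega> K) = i} = G i \<inter> ?cl Q"
      and Hs_Q: "{K\<in>?cl Q. h K = i} = Hs i \<inter> ?cl Q"
      using h_iff[OF _ i] by (auto simp: G_def)
    have error_Hs: "\<bar>real (card (Hs i \<inter> ?cl Q)) - d i * real (card (?cl Q))\<bar>
                      \<le> (\<epsilon> + 5 * \<delta> / \<epsilon>) * real (card (?cl Q))"
      using regular_wrt_below_threshold[OF finU _ kjH reg[OF i] \<open>0 < \<epsilon>\<close> _ \<open>\<epsilon> + \<delta> \<le> 1\<close> d(1)[OF i]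
          d_le_1[OF i] vertices \<open>Q \<subseteq> H\<close> large] \<open>2 \<le> k\<close> \<open>0 < \<delta>\<close> by simp
    have "\<bar>real (card (G i \<inter> ?cl Q)) - ((1 - \<gamma>) * real (card (Hs i \<inter> ?cl Q)) + \<gamma> * (d i * real (card (?cl Q))))\<bar>
           \<le> \<gamma> * \<epsilon> / 4 * real (card (?cl Q))"
      using conc[OF i \<open>Q \<subseteq> H\<close>] large unfolding G_Q Hs_Q C_def by (simp add: mult.assoc)
    then show "\<bar>real (card (G i \<inter> ?cl Q)) - d i * real (card (?cl Q))\<bar> \<le> \<epsilon> * real (card (?cl Q))"
      using mixing_error_le[OF _ error_Hs \<gamma>(1,2) \<open>0 < \<epsilon>\<close> _ \<gamma>(3)] \<open>0 < \<delta>\<close> by simp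
  qed
  ultimately show ?thesis
    unfolding C_def by blast
qed

text \<open>If \<open>\<epsilon> \<ge> 1 - d\<^sub>0\<close> every density \<open>d\<^sub>i \<in> [d\<^sub>0, 1 - d\<^sub>0]\<close> is within \<open>\<epsilon>\<close> of any relative
  density, so the given partition itself works.\<close>
lemma regular_refinement_trivial:
  fixes \<epsilon> d0 \<nu> :: real and d :: "nat \<Rightarrow> real" and Hs :: "nat \<Rightarrow> 'a set set"
  assumes "1 \<le> s" and "0 < m" and "0 < \<nu>" and "1 - d0 \<le> \<epsilon>" and "0 < d0"
    and d: "\<And>i. i \<in> {1..s} \<Longrightarrow> d0 \<le> d i" "(\<Sum>i=1..s. d i) = 1"
    and vc: "vertex_classes m k V"
    and kjHs: "\<And>i. i \<in> {1..s} \<Longrightarrow> kj_graph k V k (Hs i)"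
    and part: "partitions s Hs (cliques k V (k-1) H)"
  shows "\<exists>G. (\<forall>i\<in>{1..s}. kj_graph k V k (G i)) \<and> partitions s G (cliques k V (k-1) H) \<and>
      (\<forall>i\<in>{1..s}. regular_wrt k V \<epsilon> (d i) (G i) H) \<and>
      (\<forall>i\<in>{1..s}. real (card ((G i - Hs i) \<union> (Hs i - G i))) \<le> \<nu> * real m ^ k)"
proof (intro exI[of _ Hs] conjI ballI kjHs part)
  fix i assume i: "i \<in> {1..s}"
  show "real (card ((Hs i - Hs i) \<union> (Hs i - Hs i))) \<le> \<nu> * real m ^ k"
    using \<open>0 < \<nu>\<close> by simp
  show "regular_wrt k V \<epsilon> (d i) (Hs i) H"
  proof (cases "s = 1")
    case True
    then have "Hs i = cliques k V (k-1) H" and "d i = 1"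
      using part d(2) i unfolding partitions_def by auto
    then show ?thesis
      using regular_wrt_cliques[of \<epsilon>] assms(4,5) d(1)[OF i] d(2) True by simp
  next
    case False
    define j :: nat where "j = (if i = 1 then 2 else 1)"
    have j: "j \<in> {1..s}" "j \<noteq> i"
      using i \<open>1 \<le> s\<close> False by (auto simp: j_def)
    have "d i + d j = (\<Sum>l\<in>{i, j}. d l)"
      using j by simp
    also have "\<dots> \<le> (\<Sum>l=1..s. d l)"
      using i j d(1) \<open>0 < d0\<close> by (intro sum_mono2) (auto intro: order_trans[of 0 d0, OF less_imp_le])
    finally have "d i \<le> 1 - d0"
      using d(1)[OF j(1)] d(2) by linarith
    then show ?thesis
      using regular_wrt_if_density_far_from_bounds[OF finite_vertices[OF vc \<open>0 < m\<close>]] d(1)[OF i]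
        assms(4) by simp
  qed
qed

section \<open>Hierarchy functions\<close>

lemma hier_fun_intro:
  assumes pos: "\<And>xs. length xs = n \<Longrightarrow> (\<And>i. i < n \<Longrightarrow> 0 < xs ! i) \<Longrightarrow> 0 < f xs"
    and mono: "\<And>xs ys. length xs = n \<Longrightarrow> (\<And>i. i < n \<Longrightarrow> 0 < xs ! i) \<Longrightarrow>
                 (\<And>i. i < n \<Longrightarrow> xs ! i \<le> ys ! i) \<Longrightarrow> f xs \<le> f ys"
  shows "hier_fun n f"
  unfolding hier_fun_def
proof (intro conjI allI impI)
  fix xs :: "real list" assume "length xs = n \<and> (\<forall>x\<in>set xs. 0 < x)"
  then show "0 < f xs"
    by (intro pos) (auto simp: nth_mem)
next
  fix xs ys :: "real list" assume "length xs = n \<and> (\<forall>x\<in>set xs. 0 < x) \<and> list_all2 (\<le>) xs ys"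
  then show "f xs \<le> f ys"
    by (intro mono) (auto simp: nth_mem list_all2_nthD)
qed

lemma exp_neg_div_square_mono:
  fixes x y c :: real
  assumes "0 < x" and "x \<le> y" and "0 \<le> c"
  shows "exp (- c / x\<^sup>2) \<le> exp (- c / y\<^sup>2)"
proof -
  have "x\<^sup>2 \<le> y\<^sup>2"
    using assms by (intro power_mono) auto
  then have "c / y\<^sup>2 \<le> c / x\<^sup>2"
    using assms by (intro divide_left_mono) auto
  then show ?thesis
    by simp
qed

text \<open>Argument \<open>2\<close> of \<open>delta_threshold\<close> and argument \<open>3\<close> of \<open>inverse_m_threshold\<close> are \<open>x = 1/k\<close>;
  the factor \<open>exp (-2/x\<^sup>2) = exp (-2 k\<^sup>2) \<le> (2k)\<^sup>-\<^sup>k\<close> stands in for \<open>(2k)\<^sup>-\<^sup>k\<close> because it is evidently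
  non-decreasing in \<open>x\<close>.\<close>
definition delta_threshold :: "real list \<Rightarrow> real" where
  "delta_threshold xs = xs!4 * xs!0 * (xs!1)\<^sup>2 * exp (- 2 / (xs!2)\<^sup>2) / 20"

definition inverse_m_threshold :: "real list \<Rightarrow> real" where
  "inverse_m_threshold xs = xs!0 * (xs!1)\<^sup>2 * (xs!2)^4 * xs!3 * xs!4 * exp (- 6 / (xs!3)\<^sup>2) / 200"

lemma hier_fun_delta_threshold: "hier_fun 5 delta_threshold"
proof (rule hier_fun_intro)
  fix xs :: "real list" assume "\<And>i. i < 5 \<Longrightarrow> 0 < xs ! i"
  from this[of 0] this[of 1] this[of 2] this[of 4] show "0 < delta_threshold xs"
    by (simp add: delta_threshold_def)
next
  fix xs ys :: "real list"
  assume pos: "\<And>i. i < 5 \<Longrightarrow> 0 < xs ! i" and le: "\<And>i. i < 5 \<Longrightarrow> xs ! i \<le> ys ! i"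
  have "exp (- 2 / (xs!2)\<^sup>2) \<le> exp (- 2 / (ys!2)\<^sup>2)"
    using pos[of 2] le[of 2] by (intro exp_neg_div_square_mono) auto
  moreover have "(xs!1)\<^sup>2 \<le> (ys!1)\<^sup>2"
    using pos[of 1] le[of 1] by (intro power_mono) auto
  ultimately show "delta_threshold xs \<le> delta_threshold ys"
    unfolding delta_threshold_def using pos[of 0] pos[of 1] pos[of 4] le[of 0] le[of 4]
    by (intro divide_right_mono mult_mono) (auto intro!: mult_nonneg_nonneg)
qed

lemma hier_fun_inverse_m_threshold: "hier_fun 6 inverse_m_threshold"
proof (rule hier_fun_intro)
  fix xs :: "real list" assume "\<And>i. i < 6 \<Longrightarrow> 0 < xs ! i"
  from this[of 0] this[of 1] this[of 2] this[of 3] this[of 4] show "0 < inverse_m_threshold xs"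
    by (simp add: inverse_m_threshold_def)
next
  fix xs ys :: "real list"
  assume pos: "\<And>i. i < 6 \<Longrightarrow> 0 < xs ! i" and le: "\<And>i. i < 6 \<Longrightarrow> xs ! i \<le> ys ! i"
  have "exp (- 6 / (xs!3)\<^sup>2) \<le> exp (- 6 / (ys!3)\<^sup>2)"
    using pos[of 3] le[of 3] by (intro exp_neg_div_square_mono) auto
  moreover have "(xs!1)\<^sup>2 \<le> (ys!1)\<^sup>2" and "(xs!2)^4 \<le> (ys!2)^4"
    using pos[of 1] le[of 1] pos[of 2] le[of 2] by (intro power_mono; simp)+
  ultimately show "inverse_m_threshold xs \<le> inverse_m_threshold ys"
    unfolding inverse_m_threshold_def
    using pos[of 0] pos[of 1] pos[of 2] pos[of 3] pos[of 4] le[of 0] le[of 3] le[of 4]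
    by (intro divide_right_mono mult_mono) (auto intro!: mult_nonneg_nonneg)
qed

lemma card_power_le_exp: "real ((2 * k) ^ k) \<le> exp (2 * real k ^ 2)"
proof -
  have "real (2 * k) \<le> exp (2 * real k)"
    using exp_ge_add_one_self[of "2 * real k"] by linarith
  then have "real (2 * k) ^ k \<le> exp (2 * real k) ^ k"
    by (intro power_mono) auto
  also have "\<dots> = exp (2 * real k ^ 2)"
    by (simp add: exp_of_nat_mult[symmetric] power2_eq_square algebra_simps)
  finally show ?thesis
    by simp
qed

lemma delta_threshold_eq:
  assumes "0 < k"
  shows "delta_threshold [\<nu>, \<epsilon>, 1 / real k, x, d0] = d0 * (\<nu> * \<epsilon>\<^sup>2 / (20 * exp (2 * real k ^ 2)))"
  using assms by (simp add: delta_threshold_def power_divide exp_minus field_simps)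

lemma inverse_m_threshold_eq:
  assumes "0 < k"
  shows "inverse_m_threshold [\<delta>, \<nu>, \<epsilon>, 1 / real k, 1 / real s, d0]
           = \<delta> * \<nu>\<^sup>2 * \<epsilon>^4 / (200 * real k * real s * exp (2 * real k ^ 2) ^ 3)"
proof -
  define E where "E = exp (2 * real k ^ 2)"
  have "exp (- 6 / (1 / real k)\<^sup>2) = 1 / E ^ 3"
    using assms by (simp add: E_def power_divide exp_minus exp_of_nat_mult[symmetric] inverse_eq_divide)
  then show ?thesis
    unfolding E_def[symmetric] by (simp add: inverse_m_threshold_def field_simps)
qed

lemma delta_threshold_consequences:
  fixes \<epsilon> d0 \<nu> \<delta> :: real
  assumes "1 \<le> k" and "0 < \<epsilon>" and "\<epsilon> \<le> 1" and "0 < d0" and "d0 \<le> 1" and "0 < \<nu>" and "\<nu> \<le> 1"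
    and \<delta>_le: "\<delta> \<le> delta_threshold [\<nu>, \<epsilon>, 1 / real k, 1 / real s, d0]"
  shows "\<delta> \<le> d0" and "\<delta> \<le> \<nu> * \<epsilon>\<^sup>2 / (20 * real ((2*k)^k))"
proof -
  define E where "E = exp (2 * real k ^ 2)"
  have "1 \<le> real ((2*k)^k)" and "real ((2*k)^k) \<le> E"
    unfolding E_def by (rule one_le_double_power card_power_le_exp)+
  have \<delta>_th: "delta_threshold [\<nu>, \<epsilon>, 1 / real k, 1 / real s, d0] = d0 * (\<nu> * \<epsilon>\<^sup>2 / (20 * E))"
    unfolding E_def by (rule delta_threshold_eq) (use \<open>1 \<le> k\<close> in simp)
  have "\<nu> * \<epsilon>\<^sup>2 \<le> 1 * 1"
    using assms(2,3,6,7) by (intro mult_mono) (auto simp: power_le_one)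
  then have "\<nu> * \<epsilon>\<^sup>2 / (20 * E) \<le> 1"
    using \<open>1 \<le> real ((2*k)^k)\<close> \<open>real ((2*k)^k) \<le> E\<close> by (simp add: field_simps)
  then show "\<delta> \<le> d0"
    using \<delta>_le \<delta>_th \<open>0 < d0\<close> by (metis mult_left_le order_trans less_imp_le)
  have "d0 * (\<nu> * \<epsilon>\<^sup>2 / (20 * E)) \<le> 1 * (\<nu> * \<epsilon>\<^sup>2 / (20 * E))"
    using assms(2,5,6) \<open>1 \<le> real ((2*k)^k)\<close> \<open>real ((2*k)^k) \<le> E\<close> by (intro mult_right_mono) auto
  also have "\<dots> \<le> \<nu> * \<epsilon>\<^sup>2 / (20 * real ((2*k)^k))"
    using \<open>1 \<le> real ((2*k)^k)\<close> \<open>real ((2*k)^k) \<le> E\<close> assms(2,6) by (simp add: frac_le)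
  finally show "\<delta> \<le> \<nu> * \<epsilon>\<^sup>2 / (20 * real ((2*k)^k))"
    using \<delta>_le \<delta>_th by simp
qed

lemma inverse_m_threshold_consequences:
  fixes \<epsilon> d0 \<nu> \<delta> :: real
  assumes "2 \<le> k" and "1 \<le> s" and "0 < \<epsilon>" and "\<epsilon> \<le> 1" and "0 < \<nu>" and "\<nu> \<le> 1"
    and "0 < \<delta>" and "\<delta> \<le> 1" and "0 < m"
    and m_inv_le: "1 / real m \<le> inverse_m_threshold [\<delta>, \<nu>, \<epsilon>, 1 / real k, 1 / real s, d0]"
  shows "2 * real k \<le> \<delta> * \<epsilon> * real m"
    and "3 * real s + real ((2*k)^k) < \<nu>\<^sup>2 * \<epsilon>^4 / (32 * (real ((2*k)^k))\<^sup>2) * real m"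
proof -
  define E where "E = exp (2 * real k ^ 2)"
  define \<kappa> where "\<kappa> = real ((2*k)^k)"
  have "1 \<le> \<kappa>" and "\<kappa> \<le> E"
    unfolding \<kappa>_def E_def by (rule one_le_double_power card_power_le_exp)+
  have "0 < real k" and "1 \<le> real s" and "0 < real m" and "1 \<le> E"
    using assms(1,2,9) \<open>1 \<le> \<kappa>\<close> \<open>\<kappa> \<le> E\<close> by simp_all
  have key: "200 * real k * real s * E^3 \<le> real m * (\<delta> * \<nu>\<^sup>2 * \<epsilon>^4)"
  proof -
    have "0 < 200 * real k * real s * E^3"
      using \<open>0 < real k\<close> \<open>1 \<le> real s\<close> \<open>1 \<le> E\<close> by simp
    then show ?thesis
      using m_inv_le inverse_m_threshold_eq[of k] \<open>0 < real k\<close> \<open>0 < real m\<close>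
      by (simp add: E_def field_simps)
  qed
  have "1 \<le> E^3"
    using \<open>1 \<le> E\<close> by (simp add: one_le_power)
  then have "1 \<le> real s * E^3"
    using \<open>1 \<le> real s\<close> mult_mono[of 1 "real s" 1 "E^3"] by simp
  then have "2 * real k \<le> 200 * real k * real s * E^3"
    using \<open>0 < real k\<close> by (simp add: mult.assoc)
  also note key
  also have "real m * (\<delta> * \<nu>\<^sup>2 * \<epsilon>^4) = (\<delta> * \<epsilon> * real m) * (\<nu>\<^sup>2 * \<epsilon>^3)"
    by (simp add: eval_nat_numeral algebra_simps)
  also have "\<dots> \<le> (\<delta> * \<epsilon> * real m) * 1"
    using assms(3-7) \<open>0 < real m\<close> by (intro mult_left_mono mult_le_one) (auto simp: power_le_one)
  finally show "2 * real k \<le> \<delta> * \<epsilon> * real m"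
    by simp
  have "\<delta> * (\<nu>\<^sup>2 * \<epsilon>^4) \<le> \<nu>\<^sup>2 * \<epsilon>^4"
    using \<open>\<delta> \<le> 1\<close> \<open>0 < \<delta>\<close> by (intro mult_left_le_one_le) auto
  then have drop_\<delta>: "real m * (\<delta> * \<nu>\<^sup>2 * \<epsilon>^4) \<le> real m * (\<nu>\<^sup>2 * \<epsilon>^4)"
    using \<open>0 < real m\<close> by (simp add: mult.assoc)
  have "3 * real s * 1 \<le> 3 * real s * E" and "1 * \<kappa> \<le> real s * E"
    using \<open>1 \<le> E\<close> \<open>1 \<le> real s\<close> \<open>\<kappa> \<le> E\<close> \<open>1 \<le> \<kappa>\<close> by (intro mult_mono; simp)+
  then have "3 * real s + \<kappa> \<le> 4 * real s * E"
    by simp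
  then have "(3 * real s + \<kappa>) * (32 * \<kappa>\<^sup>2) \<le> 4 * real s * E * (32 * E\<^sup>2)"
    using \<open>\<kappa> \<le> E\<close> \<open>1 \<le> \<kappa>\<close> \<open>1 \<le> real s\<close> by (intro mult_mono power_mono) auto
  also have "\<dots> < 200 * real k * real s * E^3"
    using \<open>2 \<le> k\<close> \<open>1 \<le> real s\<close> \<open>1 \<le> E\<close> by (simp add: eval_nat_numeral)
  also note key
  also note drop_\<delta>
  finally have "3 * real s + \<kappa> < \<nu>\<^sup>2 * \<epsilon>^4 * real m / (32 * \<kappa>\<^sup>2)"
    using \<open>1 \<le> \<kappa>\<close> by (simp add: pos_less_divide_eq ac_simps)
  then show "3 * real s + real ((2*k)^k) < \<nu>\<^sup>2 * \<epsilon>^4 / (32 * (real ((2*k)^k))\<^sup>2) * real m"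
    unfolding \<kappa>_def by simp
qed

lemma regular_refinement_under_hierarchy:
  fixes \<epsilon> d0 \<nu> \<delta> :: real and d :: "nat \<Rightarrow> real" and Hs :: "nat \<Rightarrow> 'a set set"
  assumes "2 \<le> k" and "1 \<le> s" and "0 < \<epsilon>" and "0 < d0" and "d0 \<le> 1/2"
    and "0 < \<nu>" and "\<nu> \<le> 1" and "0 < \<delta>" and "0 < m"
    and \<delta>_le: "\<delta> \<le> delta_threshold [\<nu>, \<epsilon>, 1 / real k, 1 / real s, d0]"
    and m_inv_le: "1 / real m \<le> inverse_m_threshold [\<delta>, \<nu>, \<epsilon>, 1 / real k, 1 / real s, d0]"
    and d: "\<And>i. i \<in> {1..s} \<Longrightarrow> d0 \<le> d i" "(\<Sum>i=1..s. d i) = 1"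
    and vc: "vertex_classes m k V" and kjH: "kj_graph k V (k-1) H"
    and many: "\<epsilon> * real m ^ k \<le> real (card (cliques k V (k-1) H))"
    and kjHs: "\<And>i. i \<in> {1..s} \<Longrightarrow> kj_graph k V k (Hs i)"
    and part: "partitions s Hs (cliques k V (k-1) H)"
    and reg: "\<And>i. i \<in> {1..s} \<Longrightarrow> regular_wrt k V (\<epsilon> + \<delta>) (d i) (Hs i) H"
  shows "\<exists>G. (\<forall>i\<in>{1..s}. kj_graph k V k (G i)) \<and> partitions s G (cliques k V (k-1) H) \<and>
      (\<forall>i\<in>{1..s}. regular_wrt k V \<epsilon> (d i) (G i) H) \<and>
      (\<forall>i\<in>{1..s}. real (card ((G i - Hs i) \<union> (Hs i - G i))) \<le> \<nu> * real m ^ k)"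
proof (cases "1 - d0 \<le> \<epsilon>")
  case True
  then show ?thesis
    by (rule regular_refinement_trivial[OF \<open>1 \<le> s\<close> \<open>0 < m\<close> \<open>0 < \<nu>\<close> _ \<open>0 < d0\<close> d vc kjHs part])
next
  case False
  then have "\<epsilon> < 1"
    using \<open>0 < d0\<close> by linarith
  have "\<delta> \<le> d0" and \<delta>_small: "\<delta> \<le> \<nu> * \<epsilon>\<^sup>2 / (20 * real ((2*k)^k))"
    using delta_threshold_consequences[OF _ \<open>0 < \<epsilon>\<close> _ \<open>0 < d0\<close> _ \<open>0 < \<nu>\<close> \<open>\<nu> \<le> 1\<close> \<delta>_le]
      \<open>2 \<le> k\<close> \<open>\<epsilon> < 1\<close> \<open>d0 \<le> 1/2\<close> by simp_all
  have "\<epsilon> + \<delta> \<le> 1"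
    using \<open>\<delta> \<le> d0\<close> False by simp
  have "\<epsilon> \<le> 1" and "\<delta> \<le> 1"
    using \<open>\<epsilon> < 1\<close> \<open>\<delta> \<le> d0\<close> \<open>d0 \<le> 1/2\<close> by linarith+
  note m_large = inverse_m_threshold_consequences[OF \<open>2 \<le> k\<close> \<open>1 \<le> s\<close> \<open>0 < \<epsilon>\<close> \<open>\<epsilon> \<le> 1\<close> \<open>0 < \<nu>\<close>
      \<open>\<nu> \<le> 1\<close> \<open>0 < \<delta>\<close> \<open>\<delta> \<le> 1\<close> \<open>0 < m\<close> m_inv_le]
  have d_nonneg: "0 \<le> d i" if "i \<in> {1..s}" for i
    using d(1)[OF that] \<open>0 < d0\<close> by linarith
  show ?thesis
    by (rule regular_refinement_exists[where d = d, OF \<open>2 \<le> k\<close> \<open>1 \<le> s\<close> \<open>0 < m\<close> \<open>0 < \<epsilon>\<close> \<open>0 < \<nu>\<close>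
          \<open>\<nu> \<le> 1\<close> \<open>0 < \<delta>\<close> \<open>\<epsilon> + \<delta> \<le> 1\<close> d_nonneg d(2) vc kjH many part reg \<delta>_small m_large])
qed

theorem lemma4p11:
  shows "\<exists>f\<nu> f\<delta> fm. hier_fun 4 f\<nu> \<and> hier_fun 5 f\<delta> \<and> hier_fun 6 fm \<and>
    (\<forall>(\<epsilon>::real) (k::nat) (s::nat) (d0::real) (\<nu>::real) (\<delta>::real) (m::nat)
       (d::nat \<Rightarrow> real) (V::nat \<Rightarrow> nat set) (H::nat set set) (Hs::nat \<Rightarrow> nat set set).
       2 \<le> k \<and> 1 \<le> s \<and> 0 < \<epsilon> \<and> 0 < d0 \<and> d0 \<le> 1/2 \<and> 0 < \<nu> \<and> 0 < \<delta> \<and> 0 < m \<and>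
       \<nu> \<le> f\<nu> [\<epsilon>, 1 / real k, 1 / real s, d0] \<and>
       \<delta> \<le> f\<delta> [\<nu>, \<epsilon>, 1 / real k, 1 / real s, d0] \<and>
       1 / real m \<le> fm [\<delta>, \<nu>, \<epsilon>, 1 / real k, 1 / real s, d0] \<and>
       (\<forall>i\<in>{1..s}. d0 \<le> d i) \<and> (\<Sum>i=1..s. d i) = 1 \<and>
       vertex_classes m k V \<and>
       kj_graph k V (k-1) H \<and>
       real (card (cliques k V (k-1) H)) \<ge> \<epsilon> * real m ^ k \<and>
       (\<forall>i\<in>{1..s}. kj_graph k V k (Hs i)) \<and>
       partitions s Hs (cliques k V (k-1) H) \<and>
       (\<forall>i\<in>{1..s}. regular_wrt k V (\<epsilon> + \<delta>) (d i) (Hs i) H)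
     \<longrightarrow> (\<exists>G::nat \<Rightarrow> nat set set.
            (\<forall>i\<in>{1..s}. kj_graph k V k (G i)) \<and>
            partitions s G (cliques k V (k-1) H) \<and>
            (\<forall>i\<in>{1..s}. regular_wrt k V \<epsilon> (d i) (G i) H) \<and>
            (\<forall>i\<in>{1..s}. real (card ((G i - Hs i) \<union> (Hs i - G i))) \<le> \<nu> * real m ^ k)))"
proof (rule exI[of _ "\<lambda>_. 1"], rule exI[of _ delta_threshold], rule exI[of _ inverse_m_threshold],
    intro conjI allI impI)
  show "hier_fun 4 (\<lambda>_. 1)"
    by (simp add: hier_fun_def)
  show "hier_fun 5 delta_threshold"
    by (rule hier_fun_delta_threshold)
  show "hier_fun 6 inverse_m_threshold"
    by (rule hier_fun_inverse_m_threshold)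
qed (elim conjE, rule regular_refinement_under_hierarchy, auto)

end
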